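(* Let $\operatorname{char}K\ne2$ and let $\mathbf J=\mathrm{Kan}(\mathbf P)$. Then $\mathbf J=\bigoplus_{n_1,n_2,n_3,n_4\ge0}\mathbf J_{n_1n_2n_3n_4}$, the $\mathbb N_0^4$-grading by multidegree in the generators $V_0,V_1,V_2,\bar1$, and the set of dimensions $\{\dim_K\mathbf J_{n_1n_2n_3n_4}\mid(n_1,n_2,n_3,n_4)\in\mathbb N_0^4\}$ is unbounded.
   Context: $H_\infty=\Lambda(x_i,y_i\mid i\ge0)$ is the Grassmann algebra over $K$ on odd generators with Poisson bracket $\{y_i,x_j\}=\delta_{ij}$, $\{x_i,x_j\}=\{y_i,y_j\}=0$; $\widetilde H$ is its completion by formal sums $c\cdot1+\sum\lambda_{\alpha,\beta}x^\alpha y^\beta$ over monomials with $\beta\ne0$ and (largest index in $\alpha$) $<$ (largest index in $\beta$). $V_i=\sum_{k\ge0}\big(\prod_{n=0}^{k-1}x_{i+3n}x_{i+3n+1}\big)y_{i+3k}$; $\mathbf P$ is the smallest unital subalgebra of $\widetilde H$ containing $V_0,V_1,V_2$ closed under product and bracket. $\mathrm{Kan}(\mathbf P)=\mathbf P\oplus\bar{\mathbf P}$ with $|\bar a|=1-|a|$ and $a\bullet b=ab$, $\bar a\bullet b=(-1)^{|b|}\overline{ab}$, $a\bullet\bar b=\overline{ab}$, $\bar a\bullet\bar b=(-1)^{|b|}\{a,b\}$; it is generated by $V_0,V_1,V_2,\bar1$, and $\mathbf J_{n_1n_2n_3n_4}$ is the span of Jordan products with $n_1,n_2,n_3,n_4$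 occurrences of $V_0,V_1,V_2,\bar1$ respectively. *)

theory Defs
  imports Main "HOL.Vector_Spaces" "HOL-Library.Function_Algebras" "HOL-Library.Product_Plus"
          "HOL-Library.Groups_Big_Fun"
begin

text \<open>A monomial x^\<alpha> y^\<beta> of the Grassmann algebra H = \<Lambda>(x_i, y_i | i \<ge> 0) is encoded by the
  pair (\<alpha>, \<beta>) of finite index sets; it stands for the ordered product
  x_{a1} ... x_{ak} y_{b1} ... y_{bl} with a1 < ... < ak and b1 < ... < bl.
  A (formal, possibly infinite) sum is a coefficient function on monomials.\<close>

type_synonym mon = "nat set \<times> nat set"
type_synonym 'k ser = "mon \<Rightarrow> 'k"

definition admissible :: "mon \<Rightarrow> bool" where
  "admissible m \<longleftrightarrow> finite (fst m) \<and> finite (snd m) \<and>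
     ((fst m = {} \<and> snd m = {}) \<or> (snd m \<noteq> {} \<and> (\<forall>a\<in>fst m. a < Max (snd m))))"

definition Htilde :: "'k::field ser set" where
  "Htilde = {f. \<forall>m. f m \<noteq> 0 \<longrightarrow> admissible m}"

text \<open>Number of pairs (a,b) with a \<in> A, b \<in> B, b < a: sorting x^A x^B into x^(A \<union> B)
  (for disjoint A, B) produces the sign (-1)^inv A B.\<close>
definition inv :: "nat set \<Rightarrow> nat set \<Rightarrow> nat" where
  "inv A B = card {(a, b). a \<in> A \<and> b \<in> B \<and> b < a}"

text \<open>Sign of x^\<alpha>1 y^\<beta>1 * x^\<alpha>2 y^\<beta>2 = sign * x^(\<alpha>1\<union>\<alpha>2) y^(\<beta>1\<union>\<beta>2) (disjoint case).\<close>
definition msign :: "mon \<Rightarrow> mon \<Rightarrow> 'k::field" where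
  "msign m1 m2 = (-1) ^ (card (snd m1) * card (fst m2) + inv (fst m1) (fst m2) + inv (snd m1) (snd m2))"

definition smul :: "'k::field ser \<Rightarrow> 'k ser \<Rightarrow> 'k ser" where
  "smul f g m = (\<Sum>a1\<in>Pow (fst m). \<Sum>b1\<in>Pow (snd m).
      msign (a1, b1) (fst m - a1, snd m - b1) * f (a1, b1) * g (fst m - a1, snd m - b1))"

text \<open>Right derivatives (f \<partial>/\<partial>y_i from the right, f \<partial>/\<partial>x_i from the right) and
  left derivatives (\<partial>/\<partial>x_i g, \<partial>/\<partial>y_i g from the left) of formal sums.\<close>
definition dRy :: "nat \<Rightarrow> 'k::field ser \<Rightarrow> 'k ser" where
  "dRy i f m = (if i \<in> snd m then 0
     else (-1) ^ card {b \<in> snd m. i < b} * f (fst m, insert i (snd m)))"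

definition dRx :: "nat \<Rightarrow> 'k::field ser \<Rightarrow> 'k ser" where
  "dRx i f m = (if i \<in> fst m then 0
     else (-1) ^ (card {a \<in> fst m. i < a} + card (snd m)) * f (insert i (fst m), snd m))"

definition dLx :: "nat \<Rightarrow> 'k::field ser \<Rightarrow> 'k ser" where
  "dLx i g m = (if i \<in> fst m then 0
     else (-1) ^ card {a \<in> fst m. a < i} * g (insert i (fst m), snd m))"

definition dLy :: "nat \<Rightarrow> 'k::field ser \<Rightarrow> 'k ser" where
  "dLy i g m = (if i \<in> snd m then 0
     else (-1) ^ (card (fst m) + card {b \<in> snd m. b < i}) * g (fst m, insert i (snd m)))"

text \<open>Poisson bracket determined by {y_i, x_j} = {x_j, y_i} = \<delta>_ij, {x_i,x_j} = {y_i,y_j} = 0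
  (odd generators, even super-Lie bracket):
  {f, g} = \<Sum>_i ( (f \<partial>\<leftarrow>_{y_i}) (\<partial>\<rightarrow>_{x_i} g) + (f \<partial>\<leftarrow>_{x_i}) (\<partial>\<rightarrow>_{y_i} g) ),
  the sum over i taken coefficientwise (it has finitely many nonzero terms on H~).\<close>
definition sbr :: "'k::field ser \<Rightarrow> 'k ser \<Rightarrow> 'k ser" where
  "sbr f g m = Sum_any (\<lambda>i. smul (dRy i f) (dLx i g) m + smul (dRx i f) (dLy i g) m)"

definition sone :: "'k::field ser" where
  "sone m = (if m = ({}, {}) then 1 else 0)"

definition sscale :: "'k::field \<Rightarrow> 'k ser \<Rightarrow> 'k ser" where
  "sscale c f m = c * f m"

text \<open>Grading automorphism: b_0 + b_1 \<mapsto> b_0 - b_1.\<close>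
definition spar :: "'k::field ser \<Rightarrow> 'k ser" where
  "spar f m = (-1) ^ (card (fst m) + card (snd m)) * f m"

definition V :: "nat \<Rightarrow> 'k::field ser" where
  "V i m = (if \<exists>k. fst m = {i + 3 * n | n. n < k} \<union> {i + 3 * n + 1 | n. n < k}
                 \<and> snd m = {i + 3 * k} then 1 else 0)"

inductive_set Palg :: "'k::field ser set" where
  one: "sone \<in> Palg"
| gen: "i < 3 \<Longrightarrow> V i \<in> Palg"
| add: "f \<in> Palg \<Longrightarrow> g \<in> Palg \<Longrightarrow> f + g \<in> Palg"
| scale: "f \<in> Palg \<Longrightarrow> sscale c f \<in> Palg"
| mult: "f \<in> Palg \<Longrightarrow> g \<in> Palg \<Longrightarrow> smul f g \<in> Palg"
| brack: "f \<in> Palg \<Longrightarrow> g \<in> Palg \<Longrightarrow> sbr f g \<in> Palg"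

text \<open>An element (a, c) stands for a + bar c.\<close>
type_synonym 'k kan = "'k ser \<times> 'k ser"

definition Kan :: "'k::field kan set" where
  "Kan = Palg \<times> Palg"

definition kscale :: "'k::field \<Rightarrow> 'k kan \<Rightarrow> 'k kan" where
  "kscale c u = (sscale c (fst u), sscale c (snd u))"

text \<open>Bilinear extension of a\<bullet>b = ab, bar a\<bullet>b = (-1)^|b| bar(ab), a\<bullet>bar b = bar(ab),
  bar a\<bullet>bar b = (-1)^|b| {a,b}.\<close>
definition kmul :: "'k::field kan \<Rightarrow> 'k kan \<Rightarrow> 'k kan" where
  "kmul u v = (smul (fst u) (fst v) + sbr (snd u) (spar (snd v)),
               smul (snd u) (spar (fst v)) + smul (fst u) (snd v))"

definition kone :: "'k::field kan" where "kone = (sone, 0)"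
definition kV :: "nat \<Rightarrow> 'k::field kan" where "kV i = (V i, 0)"
definition kbar1 :: "'k::field kan" where "kbar1 = (0, sone)"

inductive jmon :: "'k::field kan \<Rightarrow> nat \<times> nat \<times> nat \<times> nat \<Rightarrow> bool" where
  unit: "jmon kone (0, 0, 0, 0)"
| V0: "jmon (kV 0) (1, 0, 0, 0)"
| V1: "jmon (kV 1) (0, 1, 0, 0)"
| V2: "jmon (kV 2) (0, 0, 1, 0)"
| bar1: "jmon kbar1 (0, 0, 0, 1)"
| prod: "jmon u (a1, a2, a3, a4) \<Longrightarrow> jmon v (b1, b2, b3, b4) \<Longrightarrow>
         jmon (kmul u v) (a1 + b1, a2 + b2, a3 + b3, a4 + b4)"

definition Jdeg :: "nat \<times> nat \<times> nat \<times> nat \<Rightarrow> 'k::field kan set" where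
  "Jdeg d = module.span kscale {u. jmon u d}"

end

theory Submission
  imports Defs
begin

text \<open>Kan(P) is spanned by the Jordan monomials in V_0, V_1, V_2 and bar 1: every V_j lies in P,
  because V_(j+3) = {V_(j+1), {V_j, V_j}} / 2 when char K \<noteq> 2, and a bar 1 = bar a,
  bar 1 b = \<plusminus>bar b, bar a bar b = \<plusminus>{a, b} turn products and brackets of P into Jordan
  products. The sum of the components J_d is direct because H~ carries a grading by Z^4 in
  which y_i has the weight of V_i and each bracket lowers the last coordinate by 2: a Jordan
  monomial of multidegree d is homogeneous of a weight that determines d. Finally, for s < n
  the products V_3 V_6 ... V_(3n) with the factor V_(3s+3) = {V_(3s+1), {V_(3s), V_(3s)}} / 2
  replaced by {V_(3s), V_(3s)} V_(3s+1) / 2 all have the same multidegree, and they are linearly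
  independent since their terms with at most one x differ. As each J_d is spanned by finitely
  many monomials, their common component has dimension at least n.\<close>

lemma sum_eq_single:
  assumes "finite S" "\<And>x. x \<in> S \<Longrightarrow> x \<noteq> a \<Longrightarrow> f x = 0"
  shows "sum f S = (if a \<in> S then f a else 0)"
  using assms by (auto intro: sum.neutral simp: sum.remove)

abbreviation bracket_term :: "'k::field ser \<Rightarrow> 'k ser \<Rightarrow> mon \<Rightarrow> nat \<Rightarrow> 'k" where
  "bracket_term f g m i \<equiv> smul (dRy i f) (dLx i g) m + smul (dRx i f) (dLy i g) m"

lemma smul_eq_0_if_infinite: "infinite (fst m) \<or> infinite (snd m) \<Longrightarrow> smul f g m = 0"
  unfolding smul_def by auto

lemma smul_eq_single_term:
  assumes "\<And>a b. a \<subseteq> fst m \<Longrightarrow> b \<subseteq> snd m \<Longrightarrow> f (a, b) \<noteq> 0 \<Longrightarrow>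
             g (fst m - a, snd m - b) \<noteq> 0 \<Longrightarrow> (a, b) = p"
  shows "smul f g m = (if finite (fst m) \<and> finite (snd m) \<and> fst p \<subseteq> fst m \<and> snd p \<subseteq> snd m
      then msign p (fst m - fst p, snd m - snd p) * f p * g (fst m - fst p, snd m - snd p) else 0)"
proof (cases "finite (fst m) \<and> finite (snd m)")
  case True
  have "smul f g m = (\<Sum>q\<in>Pow (fst m) \<times> Pow (snd m).
      msign q (fst m - fst q, snd m - snd q) * f q * g (fst m - fst q, snd m - snd q))"
    unfolding smul_def by (simp add: sum.cartesian_product split_def)
  also have "\<dots> = (if p \<in> Pow (fst m) \<times> Pow (snd m)
      then msign p (fst m - fst p, snd m - snd p) * f p * g (fst m - fst p, snd m - snd p) else 0)"
  proof (rule sum_eq_single)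
    fix q assume q: "q \<in> Pow (fst m) \<times> Pow (snd m)" "q \<noteq> p"
    then have "f q = 0 \<or> g (fst m - fst q, snd m - snd q) = 0"
      using assms[of "fst q" "snd q"] by (metis PowD mem_Times_iff prod.collapse)
    then show "msign q (fst m - fst q, snd m - snd q) * f q * g (fst m - fst q, snd m - snd q) = 0"
      by auto
  qed (use True in simp)
  finally show ?thesis
    using True by (simp add: mem_Times_iff)
qed (auto simp: smul_eq_0_if_infinite)

lemma smul_nonzeroD:
  assumes "smul f g m \<noteq> 0"
  obtains a b where "finite (fst m)" "finite (snd m)" "a \<subseteq> fst m" "b \<subseteq> snd m"
    "f (a, b) \<noteq> 0" "g (fst m - a, snd m - b) \<noteq> 0"
proof -
  have "finite (fst m)" "finite (snd m)"
    using assms smul_eq_0_if_infinite by blast+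
  moreover have "\<exists>a b. a \<subseteq> fst m \<and> b \<subseteq> snd m \<and> f (a, b) \<noteq> 0 \<and> g (fst m - a, snd m - b) \<noteq> 0"
  proof (rule ccontr)
    assume "\<nexists>a b. a \<subseteq> fst m \<and> b \<subseteq> snd m \<and> f (a, b) \<noteq> 0 \<and> g (fst m - a, snd m - b) \<noteq> 0"
    then have "smul f g m = 0"
      unfolding smul_def by (intro sum.neutral ballI) (simp only: Pow_iff mult_eq_0_iff, blast)
    with assms show False ..
  qed
  ultimately show ?thesis
    using that by blast
qed

lemma sbr_nonzeroD:
  assumes "sbr f g m \<noteq> 0"
  shows "\<exists>i. smul (dRy i f) (dLx i g) m \<noteq> 0 \<or> smul (dRx i f) (dLy i g) m \<noteq> 0"
proof (rule ccontr)
  assume "\<nexists>i. smul (dRy i f) (dLx i g) m \<noteq> 0 \<or> smul (dRx i f) (dLy i g) m \<noteq> 0"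
  then have "sbr f g m = 0"
    unfolding sbr_def by simp
  with assms show False ..
qed

lemma dRy_nonzeroD: "dRy i f (a, b) \<noteq> 0 \<Longrightarrow> i \<notin> b \<and> f (a, insert i b) \<noteq> 0"
  unfolding dRy_def by (auto split: if_splits)

lemma dRx_nonzeroD: "dRx i f (a, b) \<noteq> 0 \<Longrightarrow> i \<notin> a \<and> f (insert i a, b) \<noteq> 0"
  unfolding dRx_def by (auto split: if_splits)

lemma dLx_nonzeroD: "dLx i f (a, b) \<noteq> 0 \<Longrightarrow> i \<notin> a \<and> f (insert i a, b) \<noteq> 0"
  unfolding dLx_def by (auto split: if_splits)

lemma dLy_nonzeroD: "dLy i f (a, b) \<noteq> 0 \<Longrightarrow> i \<notin> b \<and> f (a, insert i b) \<noteq> 0"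
  unfolding dLy_def by (auto split: if_splits)

lemma HtildeD: "f \<in> Htilde \<Longrightarrow> f m \<noteq> 0 \<Longrightarrow> admissible m"
  unfolding Htilde_def by blast

lemma admissible_finite: "admissible m \<Longrightarrow> finite (fst m) \<and> finite (snd m)"
  unfolding admissible_def by blast

lemma admissible_snd_nonempty: "admissible (A, B) \<Longrightarrow> A \<noteq> {} \<Longrightarrow> B \<noteq> {}"
  unfolding admissible_def by auto

lemma admissible_less_Max:
  assumes "admissible (A, B)" "a \<in> A" "B \<subseteq> C" "finite C"
  shows "a < Max C"
proof -
  have "B \<noteq> {}" and "a < Max B"
    using assms(1,2) unfolding admissible_def by auto
  note \<open>a < Max B\<close>
  also have "Max B \<le> Max C"
    using assms(3,4) \<open>B \<noteq> {}\<close> by (intro Max_mono)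
  finally show ?thesis .
qed

lemma admissible_Un:
  assumes "admissible (A, B)" "admissible (A', B')"
  shows "admissible (A \<union> A', B \<union> B')"
proof (cases "B \<union> B' = {}")
  case False
  have fin: "finite (A \<union> A')" "finite (B \<union> B')"
    using assms admissible_finite by auto
  have "a < Max (B \<union> B')" if "a \<in> A \<union> A'" for a
  proof (cases "a \<in> A")
    case True
    then show ?thesis
      using admissible_less_Max[OF assms(1) True] fin(2) by simp
  next
    case False
    then show ?thesis
      using admissible_less_Max[OF assms(2), of a "B \<union> B'"] that fin(2) by simp
  qed
  then show ?thesis
    using fin False unfolding admissible_def by simp
next
  case True
  then show ?thesis
    using assms unfolding admissible_def by simp
qed

lemma admissible_contract:
  assumes "admissible (insert i A, insert i B)" "finite B" "B \<noteq> {}" "i < Max B"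
  shows "admissible (A, B)"
proof -
  have "Max (insert i B) = Max B"
    using assms(2-4) by simp
  then show ?thesis
    using assms unfolding admissible_def by auto
qed

text \<open>The bound on i is what makes the sum over i defining the bracket finite.\<close>
lemma bracket_term_nonzeroD:
  assumes "f \<in> Htilde" "g \<in> Htilde"
    and "smul (dRy i f) (dLx i g) m \<noteq> 0 \<or> smul (dRx i f) (dLy i g) m \<noteq> 0"
  shows "admissible m \<and> i < Max (snd m)"
proof -
  have "admissible (insert i (fst m), insert i (snd m)) \<and> finite (snd m) \<and> snd m \<noteq> {} \<and> i < Max (snd m)"
    using assms(3)
  proof
    assume "smul (dRy i f) (dLx i g) m \<noteq> 0"
    then obtain a b where ab: "finite (fst m)" "finite (snd m)" "a \<subseteq> fst m" "b \<subseteq> snd m"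
      "dRy i f (a, b) \<noteq> 0" "dLx i g (fst m - a, snd m - b) \<noteq> 0"
      by (rule smul_nonzeroD)
    have adm: "admissible (a, insert i b)" "admissible (insert i (fst m - a), snd m - b)"
      using dRy_nonzeroD[OF ab(5)] dLx_nonzeroD[OF ab(6)] HtildeD assms(1,2) by blast+
    have "a \<union> insert i (fst m - a) = insert i (fst m)" "insert i b \<union> (snd m - b) = insert i (snd m)"
      using ab(3,4) by auto
    moreover have "snd m \<noteq> {}"
      using admissible_snd_nonempty[OF adm(2)] by blast
    ultimately show ?thesis
      using admissible_Un[OF adm] admissible_less_Max[OF adm(2), of i "snd m"] ab(2) by auto
  next
    assume "smul (dRx i f) (dLy i g) m \<noteq> 0"
    then obtain a b where ab: "finite (fst m)" "finite (snd m)" "a \<subseteq> fst m" "b \<subseteq> snd m"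
      "dRx i f (a, b) \<noteq> 0" "dLy i g (fst m - a, snd m - b) \<noteq> 0"
      by (rule smul_nonzeroD)
    have adm: "admissible (insert i a, b)" "admissible (fst m - a, insert i (snd m - b))"
      using dRx_nonzeroD[OF ab(5)] dLy_nonzeroD[OF ab(6)] HtildeD assms(1,2) by blast+
    have "insert i a \<union> (fst m - a) = insert i (fst m)" "b \<union> insert i (snd m - b) = insert i (snd m)"
      using ab(3,4) by auto
    moreover have "snd m \<noteq> {}"
      using admissible_snd_nonempty[OF adm(1)] ab(4) by blast
    ultimately show ?thesis
      using admissible_Un[OF adm] admissible_less_Max[OF adm(1), of i "snd m"] ab(2,4) by auto
  qed
  then show ?thesis
    using admissible_contract[of i "fst m" "snd m"] by auto
qed

lemma Htilde_smul:
  assumes "f \<in> Htilde" "g \<in> Htilde"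
  shows "smul f g \<in> Htilde"
  unfolding Htilde_def mem_Collect_eq
proof (intro allI impI)
  fix m assume "smul f g m \<noteq> 0"
  then obtain a b where ab: "a \<subseteq> fst m" "b \<subseteq> snd m" "f (a, b) \<noteq> 0" "g (fst m - a, snd m - b) \<noteq> 0"
    by (rule smul_nonzeroD)
  then have "admissible (a \<union> (fst m - a), b \<union> (snd m - b))"
    using assms by (intro admissible_Un) (auto dest: HtildeD)
  moreover have "(a \<union> (fst m - a), b \<union> (snd m - b)) = m"
    using ab(1,2) by (simp add: Un_absorb1 prod_eq_iff)
  ultimately show "admissible m"
    by simp
qed

lemma Htilde_sbr:
  assumes "f \<in> Htilde" "g \<in> Htilde"
  shows "sbr f g \<in> Htilde"
  unfolding Htilde_def mem_Collect_eq
proof (intro allI impI)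
  fix m assume "sbr f g m \<noteq> 0"
  then show "admissible m"
    using sbr_nonzeroD bracket_term_nonzeroD[OF assms] by blast
qed

lemma Htilde_add:
  assumes "f \<in> Htilde" "g \<in> Htilde"
  shows "f + g \<in> Htilde"
  unfolding Htilde_def mem_Collect_eq
proof (intro allI impI)
  fix m assume "(f + g) m \<noteq> 0"
  then have "f m \<noteq> 0 \<or> g m \<noteq> 0"
    by auto
  then show "admissible m"
    using HtildeD assms by blast
qed

lemma Htilde_sscale: "f \<in> Htilde \<Longrightarrow> sscale c f \<in> Htilde"
  unfolding Htilde_def sscale_def by auto

lemma Htilde_sone: "sone \<in> Htilde"
  unfolding Htilde_def sone_def admissible_def by auto

lemma Htilde_finite: "f \<in> Htilde \<Longrightarrow> f m \<noteq> 0 \<Longrightarrow> finite (fst m) \<and> finite (snd m)"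
  using HtildeD admissible_finite by blast

lemma finite_bracket_terms:
  assumes "f \<in> Htilde" "g \<in> Htilde"
  shows "finite {i. bracket_term f g m i \<noteq> 0}"
proof (rule finite_subset)
  show "{i. bracket_term f g m i \<noteq> 0} \<subseteq> {..<Max (snd m)}"
  proof
    fix i assume "i \<in> {i. bracket_term f g m i \<noteq> 0}"
    then have "smul (dRy i f) (dLx i g) m \<noteq> 0 \<or> smul (dRx i f) (dLy i g) m \<noteq> 0"
      by auto
    then show "i \<in> {..<Max (snd m)}"
      using bracket_term_nonzeroD[OF assms] by blast
  qed
qed simp

lemma smul_add_left: "smul (f + g) h = smul f h + smul g h"
  by (rule ext) (simp add: smul_def sum.distrib[symmetric] algebra_simps)

lemma smul_add_right: "smul h (f + g) = smul h f + smul h g"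
  by (rule ext) (simp add: smul_def sum.distrib[symmetric] algebra_simps)

lemma smul_sscale_left: "smul (sscale c f) g = sscale c (smul f g)"
  by (rule ext) (simp add: smul_def sscale_def sum_distrib_left algebra_simps)

lemma smul_sscale_right: "smul f (sscale c g) = sscale c (smul f g)"
  by (rule ext) (simp add: smul_def sscale_def sum_distrib_left algebra_simps)

lemma smul_zero_left [simp]: "smul 0 g = 0"
  and smul_zero_right [simp]: "smul f 0 = 0"
  by (simp_all add: fun_eq_iff smul_def)

lemma sscale_sscale: "sscale a (sscale b f) = sscale (a * b) f"
  by (simp add: fun_eq_iff sscale_def)

lemma sscale_one [simp]: "sscale 1 f = f"
  by (simp add: fun_eq_iff sscale_def)

lemma derivatives_add:
  "dRy i (f + g) = dRy i f + dRy i g" "dRx i (f + g) = dRx i f + dRx i g"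
  "dLx i (f + g) = dLx i f + dLx i g" "dLy i (f + g) = dLy i f + dLy i g"
  by (simp_all add: fun_eq_iff dRy_def dRx_def dLx_def dLy_def algebra_simps)

lemma derivatives_sscale:
  "dRy i (sscale c f) = sscale c (dRy i f)" "dRx i (sscale c f) = sscale c (dRx i f)"
  "dLx i (sscale c f) = sscale c (dLx i f)" "dLy i (sscale c f) = sscale c (dLy i f)"
  by (simp_all add: fun_eq_iff dRy_def dRx_def dLx_def dLy_def sscale_def algebra_simps)

lemma sbr_add_left:
  assumes "f \<in> Htilde" "g \<in> Htilde" "h \<in> Htilde"
  shows "sbr (f + g) h = sbr f h + sbr g h"
proof
  fix m
  have "sbr (f + g) h m = Sum_any (\<lambda>i. bracket_term f h m i + bracket_term g h m i)"
    unfolding sbr_def by (simp add: derivatives_add smul_add_left algebra_simps)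
  also have "\<dots> = Sum_any (bracket_term f h m) + Sum_any (bracket_term g h m)"
    using assms by (intro Sum_any.distrib finite_bracket_terms)
  finally show "sbr (f + g) h m = (sbr f h + sbr g h) m"
    by (simp add: sbr_def)
qed

lemma sbr_add_right:
  assumes "f \<in> Htilde" "g \<in> Htilde" "h \<in> Htilde"
  shows "sbr h (f + g) = sbr h f + sbr h g"
proof
  fix m
  have "sbr h (f + g) m = Sum_any (\<lambda>i. bracket_term h f m i + bracket_term h g m i)"
    unfolding sbr_def by (simp add: derivatives_add smul_add_right algebra_simps)
  also have "\<dots> = Sum_any (bracket_term h f m) + Sum_any (bracket_term h g m)"
    using assms by (intro Sum_any.distrib finite_bracket_terms)
  finally show "sbr h (f + g) m = (sbr h f + sbr h g) m"
    by (simp add: sbr_def)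
qed

lemma sbr_sscale_left:
  assumes "f \<in> Htilde" "g \<in> Htilde"
  shows "sbr (sscale c f) g = sscale c (sbr f g)"
proof
  fix m
  have "sbr (sscale c f) g m = Sum_any (\<lambda>i. c * bracket_term f g m i)"
    unfolding sbr_def by (simp add: derivatives_sscale smul_sscale_left sscale_def algebra_simps)
  also have "\<dots> = c * Sum_any (bracket_term f g m)"
    using assms by (intro Sum_any_right_distrib[symmetric] finite_bracket_terms)
  finally show "sbr (sscale c f) g m = sscale c (sbr f g) m"
    by (simp add: sbr_def sscale_def)
qed

lemma sbr_sscale_right:
  assumes "f \<in> Htilde" "g \<in> Htilde"
  shows "sbr f (sscale c g) = sscale c (sbr f g)"
proof
  fix m
  have "sbr f (sscale c g) m = Sum_any (\<lambda>i. c * bracket_term f g m i)"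
    unfolding sbr_def by (simp add: derivatives_sscale smul_sscale_right sscale_def algebra_simps)
  also have "\<dots> = c * Sum_any (bracket_term f g m)"
    using assms by (intro Sum_any_right_distrib[symmetric] finite_bracket_terms)
  finally show "sbr f (sscale c g) m = sscale c (sbr f g) m"
    by (simp add: sbr_def sscale_def)
qed

lemma derivatives_zero [simp]: "dRy i 0 = 0" "dRx i 0 = 0" "dLx i 0 = 0" "dLy i 0 = 0"
  by (simp_all add: fun_eq_iff dRy_def dRx_def dLx_def dLy_def)

lemma sbr_zero_left [simp]: "sbr 0 g = 0"
  and sbr_zero_right [simp]: "sbr f 0 = 0"
  by (simp_all add: fun_eq_iff sbr_def)

lemma spar_add: "spar (f + g) = spar f + spar g"
  by (simp add: fun_eq_iff spar_def algebra_simps)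

lemma spar_sscale: "spar (sscale c f) = sscale c (spar f)"
  by (simp add: fun_eq_iff spar_def sscale_def algebra_simps)

lemma spar_zero [simp]: "spar 0 = 0"
  by (simp add: fun_eq_iff spar_def)

lemma spar_sone [simp]: "spar sone = sone"
  by (simp add: fun_eq_iff spar_def sone_def)

lemma spar_spar [simp]: "spar (spar f) = f"
  by (simp add: fun_eq_iff spar_def power_add[symmetric] power_mult_distrib[symmetric] mult.assoc[symmetric])

lemma Htilde_spar: "f \<in> Htilde \<Longrightarrow> spar f \<in> Htilde"
  unfolding Htilde_def spar_def by auto

lemma neg_one_power_card_split:
  assumes "finite A" "a \<subseteq> A" "finite B" "b \<subseteq> B"
  shows "((-1::'k::field) ^ (card A + card B)) = (-1) ^ (card a + card b) * (-1) ^ (card (A - a) + card (B - b))"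
proof -
  have "card A = card a + card (A - a)" "card B = card b + card (B - b)"
    using assms by (metis card_Diff_subset card_mono le_add_diff_inverse finite_subset)+
  then show ?thesis
    by (simp add: power_add[symmetric] algebra_simps)
qed

lemma spar_smul: "spar (smul f g) = smul (spar f) (spar g)"
proof
  fix m :: mon
  show "spar (smul f g) m = smul (spar f) (spar g) m"
  proof (cases "finite (fst m) \<and> finite (snd m)")
    case True
    show ?thesis
      unfolding spar_def smul_def sum_distrib_left
    proof (intro sum.cong refl)
      fix a b assume "a \<in> Pow (fst m)" "b \<in> Pow (snd m)"
      then show "(-1) ^ (card (fst m) + card (snd m)) *
          (msign (a, b) (fst m - a, snd m - b) * f (a, b) * g (fst m - a, snd m - b)) =
        msign (a, b) (fst m - a, snd m - b) * ((-1) ^ (card (fst (a, b)) + card (snd (a, b))) * f (a, b)) *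
          ((-1) ^ (card (fst (fst m - a, snd m - b)) + card (snd (fst m - a, snd m - b))) *
           g (fst m - a, snd m - b))"
        using True by (subst neg_one_power_card_split[of "fst m" a "snd m" b]) (auto simp: algebra_simps)
    qed
  qed (auto simp: smul_eq_0_if_infinite spar_def)
qed

lemma derivatives_spar:
  fixes f :: "'k::field ser"
  assumes "f \<in> Htilde"
  shows "dRy i (spar f) = sscale (-1) (spar (dRy i f))"
    and "dRx i (spar f) = sscale (-1) (spar (dRx i f))"
    and "dLx i (spar f) = sscale (-1) (spar (dLx i f))"
    and "dLy i (spar f) = sscale (-1) (spar (dLy i f))"
proof -
  have y: "(-1::'k) ^ (card a + card (insert i b)) * f (a, insert i b) = - ((-1) ^ (card a + card b) * f (a, insert i b))"
    if "i \<notin> b" for a b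
    using Htilde_finite[OF assms, of "(a, insert i b)"] that by (cases "f (a, insert i b) = 0") auto
  have x: "(-1::'k) ^ (card (insert i a) + card b) * f (insert i a, b) = - ((-1) ^ (card a + card b) * f (insert i a, b))"
    if "i \<notin> a" for a b
    using Htilde_finite[OF assms, of "(insert i a, b)"] that by (cases "f (insert i a, b) = 0") auto
  show "dRy i (spar f) = sscale (-1) (spar (dRy i f))"
    by (simp add: fun_eq_iff dRy_def spar_def sscale_def y)
  show "dRx i (spar f) = sscale (-1) (spar (dRx i f))"
    by (simp add: fun_eq_iff dRx_def spar_def sscale_def x)
  show "dLx i (spar f) = sscale (-1) (spar (dLx i f))"
    by (simp add: fun_eq_iff dLx_def spar_def sscale_def x)
  show "dLy i (spar f) = sscale (-1) (spar (dLy i f))"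
    by (simp add: fun_eq_iff dLy_def spar_def sscale_def y)
qed

lemma spar_sbr:
  assumes "f \<in> Htilde" "g \<in> Htilde"
  shows "spar (sbr f g) = sbr (spar f) (spar g)"
proof
  fix m
  have "bracket_term (spar f) (spar g) m i = (-1) ^ (card (fst m) + card (snd m)) * bracket_term f g m i" for i
    using assms
    by (simp add: derivatives_spar smul_sscale_left smul_sscale_right sscale_sscale spar_smul[symmetric]
        spar_def algebra_simps)
  then have "sbr (spar f) (spar g) m = Sum_any (\<lambda>i. (-1) ^ (card (fst m) + card (snd m)) * bracket_term f g m i)"
    unfolding sbr_def by simp
  also have "\<dots> = (-1) ^ (card (fst m) + card (snd m)) * Sum_any (bracket_term f g m)"
    using assms by (intro Sum_any_right_distrib[symmetric] finite_bracket_terms)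
  finally show "spar (sbr f g) m = sbr (spar f) (spar g) m"
    by (simp add: sbr_def spar_def)
qed

definition V_xset :: "nat \<Rightarrow> nat \<Rightarrow> nat set" where
  "V_xset j k = {j + 3 * n | n. n < k} \<union> {j + 3 * n + 1 | n. n < k}"

lemma mem_V_xset: "x \<in> V_xset j k \<longleftrightarrow> (\<exists>n<k. x = j + 3 * n \<or> x = j + 3 * n + 1)"
  unfolding V_xset_def by auto

lemma V_xset_0 [simp]: "V_xset j 0 = {}"
  by (simp add: V_xset_def)

lemma V_xset_Suc: "V_xset j (Suc k) = insert (j + 3 * k) (insert (j + 3 * k + 1) (V_xset j k))"
  by (auto simp: mem_V_xset less_Suc_eq)

lemma V_xset_Suc_left: "V_xset j (Suc k) = insert j (insert (j + 1) (V_xset (j + 3) k))"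
proof (rule set_eqI)
  fix x
  have "(\<exists>n<Suc k. x = j + 3 * n \<or> x = j + 3 * n + 1) \<longleftrightarrow>
      x = j \<or> x = j + 1 \<or> (\<exists>n<k. x = j + 3 + 3 * n \<or> x = j + 3 + 3 * n + 1)"
  proof
    assume "\<exists>n<Suc k. x = j + 3 * n \<or> x = j + 3 * n + 1"
    then obtain n where "n < Suc k" "x = j + 3 * n \<or> x = j + 3 * n + 1"
      by blast
    then show "x = j \<or> x = j + 1 \<or> (\<exists>n<k. x = j + 3 + 3 * n \<or> x = j + 3 + 3 * n + 1)"
      by (cases n) auto
  next
    assume "x = j \<or> x = j + 1 \<or> (\<exists>n<k. x = j + 3 + 3 * n \<or> x = j + 3 + 3 * n + 1)"
    then show "\<exists>n<Suc k. x = j + 3 * n \<or> x = j + 3 * n + 1"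
    proof (elim disjE exE conjE)
      fix n assume "n < k" "x = j + 3 + 3 * n"
      then show ?thesis
        by (intro exI[of _ "Suc n"]) auto
    next
      fix n assume "n < k" "x = j + 3 + 3 * n + 1"
      then show ?thesis
        by (intro exI[of _ "Suc n"]) auto
    qed (auto intro: exI[of _ 0])
  qed
  then show "x \<in> V_xset j (Suc k) \<longleftrightarrow> x \<in> insert j (insert (j + 1) (V_xset (j + 3) k))"
    by (simp add: mem_V_xset)
qed

lemma V_xset_ge: "x \<in> V_xset j k \<Longrightarrow> j \<le> x"
  by (auto simp: mem_V_xset)

lemma finite_V_xset [simp]: "finite (V_xset j k)"
  by (induction k) (simp_all add: V_xset_Suc)

lemma card_V_xset: "card (V_xset j k) = 2 * k"
  by (induction k) (auto simp: V_xset_Suc mem_V_xset)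

lemma V_eq: "V j m = (if \<exists>k. m = (V_xset j k, {j + 3 * k}) then 1 else 0)"
  unfolding V_def V_xset_def by (cases m) auto

lemma V_nonzero_iff: "V j m \<noteq> 0 \<longleftrightarrow> (\<exists>k. m = (V_xset j k, {j + 3 * k}))"
  by (simp add: V_eq)

lemma Htilde_V: "V j \<in> Htilde"
  unfolding Htilde_def admissible_def by (auto simp: V_nonzero_iff mem_V_xset)

lemma spar_V: "spar (V j) = sscale (-1) (V j)"
  by (auto simp: fun_eq_iff spar_def sscale_def V_eq card_V_xset)

lemma Palg_Htilde: "f \<in> Palg \<Longrightarrow> f \<in> Htilde"
  by (induction rule: Palg.induct)
    (blast intro: Htilde_sone Htilde_V Htilde_add Htilde_sscale Htilde_smul Htilde_sbr)+

lemma zero_in_Palg: "(0 :: 'k::field ser) \<in> Palg"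
proof -
  have "sscale 0 (sone :: 'k ser) \<in> Palg"
    by (intro Palg.scale Palg.one)
  moreover have "sscale 0 (sone :: 'k ser) = 0"
    by (simp add: sscale_def fun_eq_iff)
  ultimately show ?thesis
    by simp
qed

lemma Palg_spar: "f \<in> Palg \<Longrightarrow> spar f \<in> Palg"
proof (induction rule: Palg.induct)
  case (add f g)
  then show ?case
    by (simp only: spar_add) (rule Palg.add)
next
  case (brack f g)
  then show ?case
    by (simp add: spar_sbr Palg_Htilde Palg.brack)
qed (simp_all add: spar_V spar_sscale spar_smul Palg.intros)

interpretation K: vector_space "kscale :: 'k::field \<Rightarrow> 'k kan \<Rightarrow> 'k kan"
  by unfold_locales (auto simp: kscale_def sscale_def fun_eq_iff algebra_simps)

lemma Kan_subspace: "K.subspace Kan"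
  unfolding K.subspace_def Kan_def
  by (auto simp: kscale_def zero_in_Palg zero_prod_def intro: Palg.add Palg.scale)

lemma Kan_Htilde: "u \<in> Kan \<Longrightarrow> fst u \<in> Htilde \<and> snd u \<in> Htilde"
  unfolding Kan_def by (auto simp: Palg_Htilde)

lemma kmul_Kan: "u \<in> Kan \<Longrightarrow> v \<in> Kan \<Longrightarrow> kmul u v \<in> Kan"
  unfolding Kan_def kmul_def by (auto intro!: Palg.add Palg.mult Palg.brack Palg_spar)

lemma jmon_Kan: "jmon u d \<Longrightarrow> u \<in> Kan"
proof (induction rule: jmon.induct)
  case (prod u a1 a2 a3 a4 v b1 b2 b3 b4)
  then show ?case
    by (simp add: kmul_Kan)
qed (simp_all add: Kan_def kone_def kV_def kbar1_def Palg.one Palg.gen zero_in_Palg)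

lemma kmul_add_left: "u \<in> Kan \<Longrightarrow> u' \<in> Kan \<Longrightarrow> v \<in> Kan \<Longrightarrow> kmul (u + u') v = kmul u v + kmul u' v"
  by (simp add: Kan_Htilde kmul_def smul_add_left sbr_add_left Htilde_spar)

lemma kmul_add_right: "u \<in> Kan \<Longrightarrow> v \<in> Kan \<Longrightarrow> v' \<in> Kan \<Longrightarrow> kmul u (v + v') = kmul u v + kmul u v'"
  by (simp add: Kan_Htilde kmul_def smul_add_right sbr_add_right Htilde_spar spar_add)

lemma kmul_kscale_left: "u \<in> Kan \<Longrightarrow> v \<in> Kan \<Longrightarrow> kmul (kscale c u) v = kscale c (kmul u v)"
  by (simp add: Kan_Htilde kmul_def kscale_def smul_sscale_left sbr_sscale_left Htilde_spar)
    (simp add: sscale_def fun_eq_iff algebra_simps)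

lemma kmul_kscale_right: "u \<in> Kan \<Longrightarrow> v \<in> Kan \<Longrightarrow> kmul u (kscale c v) = kscale c (kmul u v)"
  by (simp add: Kan_Htilde kmul_def kscale_def smul_sscale_right sbr_sscale_right Htilde_spar spar_sscale)
    (simp add: sscale_def fun_eq_iff algebra_simps)

section \<open>Kan(P) is spanned by the Jordan monomials\<close>

lemma (in module) span_closed_bilinear:
  assumes add_left: "\<And>x x' y. x \<in> span S \<Longrightarrow> x' \<in> span S \<Longrightarrow> y \<in> span S \<Longrightarrow> f (x + x') y = f x y + f x' y"
    and add_right: "\<And>x y y'. x \<in> span S \<Longrightarrow> y \<in> span S \<Longrightarrow> y' \<in> span S \<Longrightarrow> f x (y + y') = f x y + f x y'"
    and scale_left: "\<And>c x y. x \<in> span S \<Longrightarrow> y \<in> span S \<Longrightarrow> f (c *s x) y = c *s f x y"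
    and scale_right: "\<And>c x y. x \<in> span S \<Longrightarrow> y \<in> span S \<Longrightarrow> f x (c *s y) = c *s f x y"
    and closed: "\<And>x y. x \<in> S \<Longrightarrow> y \<in> S \<Longrightarrow> f x y \<in> span S"
    and "x \<in> span S" "y \<in> span S"
  shows "f x y \<in> span S"
proof -
  have closed_left: "f x y \<in> span S" if "x \<in> span S" "y \<in> S" for x y
  proof -
    have "x \<in> span S \<and> f x y \<in> span S"
      using that(1)
    proof (induction rule: span_induct_alt)
      case base
      then show ?case
        using scale_left[where c = 0 and x = 0 and y = y] that(2) by (simp add: span_zero span_base)
    next
      case (step c x z)
      then have "f (c *s x + z) y = c *s f x y + f z y"
        using that(2) by (simp add: add_left scale_left span_base span_scale)
      then show ?case
        using step that(2) closed by (simp add: span_add span_scale span_base)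
    qed
    then show ?thesis ..
  qed
  have "y \<in> span S \<and> f x y \<in> span S"
    using assms(7)
  proof (induction rule: span_induct_alt)
    case base
    then show ?case
      using scale_right[where c = 0 and x = x and y = 0] assms(6) by (simp add: span_zero)
  next
    case (step c y z)
    then have "f x (c *s y + z) = c *s f x y + f x z"
      using assms(6) by (simp add: add_right scale_right span_base span_scale)
    then show ?case
      using step assms(6) closed_left by (simp add: span_add span_scale span_base)
  qed
  then show ?thesis ..
qed

definition jmons :: "'k::field kan set" where
  "jmons = {u. \<exists>d. jmon u d}"

lemma jmon_kmul: "jmon u d \<Longrightarrow> jmon v e \<Longrightarrow> jmon (kmul u v) (d + e)"
  by (cases d rule: prod_cases4, cases e rule: prod_cases4) (simp add: jmon.prod)

lemma span_Union_Jdeg: "K.span (\<Union>d. Jdeg d) = K.span jmons"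
proof -
  have "Jdeg d \<subseteq> K.span jmons" for d
    unfolding Jdeg_def jmons_def by (rule K.span_mono) blast
  then have "(\<Union>d. Jdeg d) \<subseteq> K.span jmons"
    by blast
  moreover have "jmons \<subseteq> K.span (\<Union>d. Jdeg d)"
    unfolding Jdeg_def jmons_def by (auto intro!: K.span_base)
  ultimately show ?thesis
    by (simp add: K.span_eq)
qed

lemma span_jmons_subset_Kan: "K.span jmons \<subseteq> Kan"
  by (rule K.span_minimal) (auto simp: jmons_def jmon_Kan Kan_subspace)

lemma kmul_span_jmons:
  fixes u v :: "'k::field kan"
  assumes "u \<in> K.span jmons" "v \<in> K.span jmons"
  shows "kmul u v \<in> K.span jmons"
proof (rule K.span_closed_bilinear[OF _ _ _ _ _ assms])
  note in_Kan = subsetD[OF span_jmons_subset_Kan]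
  fix x y :: "'k kan"
  show "kmul (x + x') y = kmul x y + kmul x' y"
    if "x \<in> K.span jmons" "x' \<in> K.span jmons" "y \<in> K.span jmons" for x'
    using that by (intro kmul_add_left in_Kan)
  show "kmul x (y + y') = kmul x y + kmul x y'"
    if "x \<in> K.span jmons" "y \<in> K.span jmons" "y' \<in> K.span jmons" for y'
    using that by (intro kmul_add_right in_Kan)
  show "kmul (kscale c x) y = kscale c (kmul x y)"
    if "x \<in> K.span jmons" "y \<in> K.span jmons" for c
    using that by (intro kmul_kscale_left in_Kan)
  show "kmul x (kscale c y) = kscale c (kmul x y)"
    if "x \<in> K.span jmons" "y \<in> K.span jmons" for c
    using that by (intro kmul_kscale_right in_Kan)
  assume "x \<in> jmons" "y \<in> jmons"
  then have "kmul x y \<in> jmons"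
    unfolding jmons_def using jmon_kmul by blast
  then show "kmul x y \<in> K.span jmons"
    by (rule K.span_base)
qed

lemma smul_sone_right: "f \<in> Htilde \<Longrightarrow> smul f sone = f"
  and smul_sone_left: "f \<in> Htilde \<Longrightarrow> smul sone f = f"
proof -
  assume f: "f \<in> Htilde"
  show "smul f sone = f"
  proof
    fix m
    have "smul f sone m = (if finite (fst m) \<and> finite (snd m) then f m else 0)"
      by (subst smul_eq_single_term[where p = m]) (auto simp: sone_def msign_def inv_def prod_eq_iff split: if_splits)
    then show "smul f sone m = f m"
      using Htilde_finite[OF f, of m] by auto
  qed
  show "smul sone f = f"
  proof
    fix m
    have "smul sone f m = (if finite (fst m) \<and> finite (snd m) then f m else 0)"
      by (subst smul_eq_single_term[where p = "({}, {})"]) (auto simp: sone_def msign_def inv_def split: if_splits)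
    then show "smul sone f m = f m"
      using Htilde_finite[OF f, of m] by auto
  qed
qed

lemma kmul_kbar1_right: "f \<in> Htilde \<Longrightarrow> kmul (f, 0) kbar1 = (0, f)"
  by (simp add: kmul_def kbar1_def smul_sone_right)

lemma kmul_kbar1_left: "g \<in> Htilde \<Longrightarrow> kmul kbar1 (g, 0) = (0, spar g)"
  by (simp add: kmul_def kbar1_def smul_sone_left Htilde_spar)

lemma kmul_bars: "kmul (0, f) (0, g) = (sbr f (spar g), 0)"
  by (simp add: kmul_def)

lemma kbar1_in_span: "kbar1 \<in> K.span jmons"
  unfolding jmons_def by (rule K.span_base) (blast intro: jmon.bar1)

lemma Palg_in_span_jmons: "f \<in> Palg \<Longrightarrow> (f, 0) \<in> K.span jmons"
proof (induct rule: Palg.induct)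
  case one
  show ?case
    unfolding jmons_def kone_def[symmetric] by (rule K.span_base) (blast intro: jmon.unit)
next
  case (gen i)
  then have "i = 0 \<or> i = 1 \<or> i = 2"
    by auto
  then have "kV i \<in> jmons"
    unfolding jmons_def using jmon.V0 jmon.V1 jmon.V2 by blast
  then show ?case
    unfolding kV_def by (rule K.span_base)
next
  case (add f g)
  from add(2,4) have "(f, 0) + (g, 0) \<in> K.span jmons"
    by (rule K.span_add)
  then show ?case
    by (simp only: add_Pair add_0)
next
  case (scale f c)
  from scale(2) have "kscale c (f, 0) \<in> K.span jmons"
    by (rule K.span_scale)
  moreover have "kscale c (f, 0) = (sscale c f, 0)"
    by (simp add: kscale_def sscale_def fun_eq_iff)
  ultimately show ?case
    by (simp add: zero_fun_def[symmetric])
next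
  case (mult f g)
  from mult(2,4) have "kmul (f, 0) (g, 0) \<in> K.span jmons"
    by (rule kmul_span_jmons)
  moreover have "kmul (f, 0) (g, 0) = (smul f g, 0)"
    by (simp add: kmul_def)
  ultimately show ?case
    by (simp only:)
next
  case (brack f g)
  from brack(2,4) have "kmul (kmul (f, 0) kbar1) (kmul kbar1 (g, 0)) \<in> K.span jmons"
    by (intro kmul_span_jmons kbar1_in_span)
  moreover have "kmul (kmul (f, 0) kbar1) (kmul kbar1 (g, 0)) = (sbr f g, 0)"
    using brack(1,3) by (simp add: kmul_kbar1_right kmul_kbar1_left kmul_bars Palg_Htilde)
  ultimately show ?case
    by (simp only:)
qed

theorem Kan_eq_span_Jdeg: "(Kan :: 'k::field kan set) = K.span (\<Union>d. Jdeg d)"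
proof
  show "(Kan :: 'k kan set) \<subseteq> K.span (\<Union>d. Jdeg d)"
  proof
    fix u :: "'k kan" assume "u \<in> Kan"
    then have "fst u \<in> Palg" "snd u \<in> Palg"
      unfolding Kan_def by auto
    then have "(fst u, 0) + kmul (snd u, 0) kbar1 \<in> K.span jmons"
      by (intro K.span_add kmul_span_jmons Palg_in_span_jmons kbar1_in_span)
    then show "u \<in> K.span (\<Union>d. Jdeg d)"
      using \<open>snd u \<in> Palg\<close> by (simp add: span_Union_Jdeg kmul_kbar1_right Palg_Htilde)
  qed
  show "K.span (\<Union>d. Jdeg d) \<subseteq> (Kan :: 'k kan set)"
    using span_jmons_subset_Kan by (simp add: span_Union_Jdeg)
qed

section \<open>A grading of the completion\<close>

definition mon_weight :: "(nat \<Rightarrow> 'a::comm_monoid_add) \<Rightarrow> (nat \<Rightarrow> 'a) \<Rightarrow> mon \<Rightarrow> 'a" where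
  "mon_weight wx wy m = sum wx (fst m) + sum wy (snd m)"

definition homogeneous :: "(nat \<Rightarrow> 'a::comm_monoid_add) \<Rightarrow> (nat \<Rightarrow> 'a) \<Rightarrow> 'a \<Rightarrow> 'k::field ser \<Rightarrow> bool" where
  "homogeneous wx wy w f \<longleftrightarrow>
     (\<forall>m. f m \<noteq> 0 \<longrightarrow> finite (fst m) \<and> finite (snd m) \<and> mon_weight wx wy m = w)"

lemma homogeneousD:
  "homogeneous wx wy w f \<Longrightarrow> f m \<noteq> 0 \<Longrightarrow> finite (fst m) \<and> finite (snd m) \<and> mon_weight wx wy m = w"
  unfolding homogeneous_def by blast

lemma homogeneousI:
  "(\<And>a b. f (a, b) \<noteq> 0 \<Longrightarrow> finite a \<and> finite b \<and> mon_weight wx wy (a, b) = w) \<Longrightarrow> homogeneous wx wy w f"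
  unfolding homogeneous_def by auto

lemma homogeneous_zero: "homogeneous wx wy w 0"
  by (simp add: homogeneous_def)

lemma homogeneous_add:
  assumes "homogeneous wx wy w f" "homogeneous wx wy w g"
  shows "homogeneous wx wy w (f + g)"
  unfolding homogeneous_def
proof (intro allI impI)
  fix m assume "(f + g) m \<noteq> 0"
  then have "f m \<noteq> 0 \<or> g m \<noteq> 0"
    by auto
  then show "finite (fst m) \<and> finite (snd m) \<and> mon_weight wx wy m = w"
    using homogeneousD assms by blast
qed

lemma homogeneous_sscale: "homogeneous wx wy w f \<Longrightarrow> homogeneous wx wy w (sscale c f)"
  unfolding homogeneous_def sscale_def by auto

lemma homogeneous_spar: "homogeneous wx wy w f \<Longrightarrow> homogeneous wx wy w (spar f)"
  unfolding homogeneous_def spar_def by simp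

lemma homogeneous_sone: "homogeneous wx wy 0 sone"
  unfolding homogeneous_def sone_def mon_weight_def by simp

lemma mon_weight_split:
  assumes "finite A" "finite B" "a \<subseteq> A" "b \<subseteq> B"
  shows "mon_weight wx wy (A, B) = mon_weight wx wy (a, b) + mon_weight wx wy (A - a, B - b)"
  using sum.subset_diff[OF assms(3,1), of wx] sum.subset_diff[OF assms(4,2), of wy]
  unfolding mon_weight_def by (simp add: ac_simps)

lemma mon_weight_insert_fst:
  "finite a \<Longrightarrow> i \<notin> a \<Longrightarrow> mon_weight wx wy (insert i a, b) = mon_weight wx wy (a, b) + wx i"
  unfolding mon_weight_def by (simp add: ac_simps)

lemma mon_weight_insert_snd:
  "finite b \<Longrightarrow> i \<notin> b \<Longrightarrow> mon_weight wx wy (a, insert i b) = mon_weight wx wy (a, b) + wy i"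
  unfolding mon_weight_def by (simp add: ac_simps)

lemma homogeneous_smul:
  assumes f: "homogeneous wx wy v f" and g: "homogeneous wx wy w g"
  shows "homogeneous wx wy (v + w) (smul f g)"
  unfolding homogeneous_def
proof (intro allI impI)
  fix m assume "smul f g m \<noteq> 0"
  then obtain a b where ab: "finite (fst m)" "finite (snd m)" "a \<subseteq> fst m" "b \<subseteq> snd m"
    "f (a, b) \<noteq> 0" "g (fst m - a, snd m - b) \<noteq> 0"
    by (rule smul_nonzeroD)
  then show "finite (fst m) \<and> finite (snd m) \<and> mon_weight wx wy m = v + w"
    using mon_weight_split[OF ab(1-4), of wx wy] homogeneousD[OF f ab(5)] homogeneousD[OF g ab(6)] by simp
qed

lemma homogeneous_derivatives:
  fixes wx wy :: "nat \<Rightarrow> 'a::ab_group_add"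
  assumes "homogeneous wx wy v f"
  shows "homogeneous wx wy (v - wy i) (dRy i f)" "homogeneous wx wy (v - wx i) (dRx i f)"
    "homogeneous wx wy (v - wx i) (dLx i f)" "homogeneous wx wy (v - wy i) (dLy i f)"
proof -
  have y: "finite a \<and> finite b \<and> mon_weight wx wy (a, b) = v - wy i" if "i \<notin> b" "f (a, insert i b) \<noteq> 0" for a b
    using homogeneousD[OF assms that(2)] mon_weight_insert_snd[OF _ that(1), of wx wy a]
    by (simp add: eq_diff_eq)
  have x: "finite a \<and> finite b \<and> mon_weight wx wy (a, b) = v - wx i" if "i \<notin> a" "f (insert i a, b) \<noteq> 0" for a b
    using homogeneousD[OF assms that(2)] mon_weight_insert_fst[OF _ that(1), of wx wy b]
    by (simp add: eq_diff_eq)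
  show "homogeneous wx wy (v - wy i) (dRy i f)"
    by (rule homogeneousI, rule y) (auto dest: dRy_nonzeroD)
  show "homogeneous wx wy (v - wx i) (dRx i f)"
    by (rule homogeneousI, rule x) (auto dest: dRx_nonzeroD)
  show "homogeneous wx wy (v - wx i) (dLx i f)"
    by (rule homogeneousI, rule x) (auto dest: dLx_nonzeroD)
  show "homogeneous wx wy (v - wy i) (dLy i f)"
    by (rule homogeneousI, rule y) (auto dest: dLy_nonzeroD)
qed

text \<open>Each term of the bracket removes one x_i and one y_i, whence the weight shift.\<close>
lemma homogeneous_sbr:
  fixes wx wy :: "nat \<Rightarrow> 'a::ab_group_add"
  assumes c: "\<And>i. wx i + wy i = c"
    and f: "homogeneous wx wy v f" and g: "homogeneous wx wy w g"
  shows "homogeneous wx wy (v + w - c) (sbr f g)"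
proof -
  have "homogeneous wx wy (v + w - c) (smul (dRy i f) (dLx i g))"
    and "homogeneous wx wy (v + w - c) (smul (dRx i f) (dLy i g))" for i
    using homogeneous_smul[OF homogeneous_derivatives(1)[OF f] homogeneous_derivatives(3)[OF g], of i]
      homogeneous_smul[OF homogeneous_derivatives(2)[OF f] homogeneous_derivatives(4)[OF g], of i]
      c[of i, symmetric] by (simp_all add: algebra_simps)
  then show ?thesis
    unfolding homogeneous_def[of _ _ _ "sbr f g"] using sbr_nonzeroD homogeneousD by blast
qed

text \<open>The weight of y_i is that of V_i: the first three coordinates count V_0, V_1, V_2 and the
  last one counts brackets. Each bracket lowers the weight by xwt i + ywt i = (0, 0, 0, 2), and
  V_(j+3) = {V_(j+1), {V_j, V_j}} / 2 (shown below), which forces the recursion.\<close>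
fun ywt :: "nat \<Rightarrow> int \<times> int \<times> int \<times> int" where
  "ywt 0 = (1, 0, 0, 0)"
| "ywt (Suc 0) = (0, 1, 0, 0)"
| "ywt (Suc (Suc 0)) = (0, 0, 1, 0)"
| "ywt (Suc (Suc (Suc j))) = ywt j + ywt j + ywt (Suc j) - (0, 0, 0, 4)"

definition xwt :: "nat \<Rightarrow> int \<times> int \<times> int \<times> int" where
  "xwt i = (0, 0, 0, 2) - ywt i"

abbreviation homog :: "int \<times> int \<times> int \<times> int \<Rightarrow> 'k::field ser \<Rightarrow> bool" where
  "homog \<equiv> homogeneous xwt ywt"

lemma ywt_add_3: "ywt (j + 3) = ywt j + ywt j + ywt (j + 1) - (0, 0, 0, 4)"
  by (simp add: numeral_3_eq_3)

lemma xwt_plus_ywt: "xwt i + ywt i = (0, 0, 0, 2)"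
  by (simp add: xwt_def)

lemma mon_weight_V: "mon_weight xwt ywt (V_xset j k, {j + 3 * k}) = ywt j"
proof (induction k)
  case (Suc k)
  let ?a = "j + 3 * k"
  have new: "?a \<notin> V_xset j k" "?a + 1 \<notin> V_xset j k"
    by (auto simp: mem_V_xset)
  then have "mon_weight xwt ywt (V_xset j (Suc k), {j + 3 * Suc k}) =
      mon_weight xwt ywt (V_xset j k, {?a}) + (xwt ?a + xwt (?a + 1) + ywt (?a + 3) - ywt ?a)"
    by (simp add: mon_weight_def V_xset_Suc algebra_simps)
  also have "xwt ?a + xwt (?a + 1) + ywt (?a + 3) - ywt ?a = 0"
    by (simp add: ywt_add_3 xwt_def)
  finally show ?case
    using Suc by simp
qed (simp add: mon_weight_def)

lemma homog_V: "homog (ywt j) (V j)"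
  unfolding homogeneous_def by (auto simp: V_nonzero_iff mon_weight_V)

section \<open>The multidegree grading of Kan(P) is direct\<close>

definition jweight :: "nat \<times> nat \<times> nat \<times> nat \<Rightarrow> int \<times> int \<times> int \<times> int" where
  "jweight = (\<lambda>(n1, n2, n3, n4). (int n1, int n2, int n3, - int n4))"

lemma jweight_add: "jweight (d + e) = jweight d + jweight e"
  by (cases d rule: prod_cases4, cases e rule: prod_cases4) (simp add: jweight_def)

lemma jweight_inject: "jweight d = jweight e \<longleftrightarrow> d = e"
  by (cases d rule: prod_cases4, cases e rule: prod_cases4) (simp add: jweight_def)

text \<open>The bar in a + bar b accounts for one factor bar 1, whence the shifted weight of b.\<close>
definition kan_homog :: "nat \<times> nat \<times> nat \<times> nat \<Rightarrow> 'k::field kan \<Rightarrow> bool" where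
  "kan_homog d u \<longleftrightarrow> homog (jweight d) (fst u) \<and> homog (jweight d + (0, 0, 0, 1)) (snd u)"

lemma kan_homog_kmul:
  assumes "kan_homog d u" "kan_homog e v"
  shows "kan_homog (d + e) (kmul u v)"
proof -
  have u: "homog (jweight d) (fst u)" "homog (jweight d + (0, 0, 0, 1)) (snd u)"
    and v: "homog (jweight e) (fst v)" "homog (jweight e + (0, 0, 0, 1)) (snd v)"
    using assms unfolding kan_homog_def by auto
  have shift: "jweight d + (0, 0, 0, 1) + (jweight e + (0, 0, 0, 1)) - (0, 0, 0, 2) = jweight (d + e)"
    by (cases d rule: prod_cases4, cases e rule: prod_cases4) (simp add: jweight_def)
  have "homog (jweight (d + e)) (smul (fst u) (fst v))"
    using homogeneous_smul[OF u(1) v(1)] by (simp add: jweight_add)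
  moreover have "homog (jweight (d + e)) (sbr (snd u) (spar (snd v)))"
    using homogeneous_sbr[OF xwt_plus_ywt u(2) homogeneous_spar[OF v(2)]] by (simp only: shift)
  moreover have "homog (jweight (d + e) + (0, 0, 0, 1)) (smul (snd u) (spar (fst v)))"
    using homogeneous_smul[OF u(2) homogeneous_spar[OF v(1)]] by (simp add: jweight_add ac_simps)
  moreover have "homog (jweight (d + e) + (0, 0, 0, 1)) (smul (fst u) (snd v))"
    using homogeneous_smul[OF u(1) v(2)] by (simp add: jweight_add ac_simps)
  ultimately show ?thesis
    unfolding kan_homog_def kmul_def by (simp add: homogeneous_add)
qed

lemma jmon_kan_homog: "jmon u d \<Longrightarrow> kan_homog d u"
proof (induction rule: jmon.induct)
  have "homog (0, 0, 0, 0) sone"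
    using homogeneous_sone[of xwt ywt] by (simp add: zero_prod_def)
  then show "kan_homog (0, 0, 0, 0) kone" "kan_homog (0, 0, 0, 1) kbar1"
    by (simp_all add: kan_homog_def jweight_def kone_def kbar1_def homogeneous_zero)
next
  have "homog (1, 0, 0, 0) (V 0)" "homog (0, 1, 0, 0) (V 1)" "homog (0, 0, 1, 0) (V 2)"
    using homog_V[of 0] homog_V[of "Suc 0"] homog_V[of "Suc (Suc 0)"] by (simp_all add: numeral_2_eq_2)
  then show "kan_homog (1, 0, 0, 0) (kV 0)" "kan_homog (0, 1, 0, 0) (kV 1)" "kan_homog (0, 0, 1, 0) (kV 2)"
    by (simp_all add: kan_homog_def jweight_def kV_def homogeneous_zero)
next
  case (prod u a1 a2 a3 a4 v b1 b2 b3 b4)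
  from prod.IH have "kan_homog ((a1, a2, a3, a4) + (b1, b2, b3, b4)) (kmul u v)"
    by (rule kan_homog_kmul)
  then show ?case
    by simp
qed

definition wproj :: "int \<times> int \<times> int \<times> int \<Rightarrow> 'k::field ser \<Rightarrow> 'k ser" where
  "wproj w f m = (if mon_weight xwt ywt m = w then f m else 0)"

definition kproj :: "nat \<times> nat \<times> nat \<times> nat \<Rightarrow> 'k::field kan \<Rightarrow> 'k kan" where
  "kproj d u = (wproj (jweight d) (fst u), wproj (jweight d + (0, 0, 0, 1)) (snd u))"

lemma wproj_homog: "homog w f \<Longrightarrow> wproj w' f = (if w' = w then f else 0)"
  unfolding homogeneous_def wproj_def by (auto simp: fun_eq_iff)

lemma kproj_kan_homog: "kan_homog e u \<Longrightarrow> kproj d u = (if d = e then u else 0)"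
  unfolding kan_homog_def kproj_def by (auto simp: wproj_homog jweight_inject zero_prod_def)

lemma kproj_add: "kproj d (u + v) = kproj d u + kproj d v"
  by (simp add: kproj_def wproj_def fun_eq_iff)

lemma kproj_kscale: "kproj d (kscale c u) = kscale c (kproj d u)"
  by (simp add: kproj_def wproj_def kscale_def sscale_def fun_eq_iff)

lemma kproj_zero: "kproj d 0 = 0"
  by (simp add: kproj_def wproj_def fun_eq_iff zero_prod_def)

lemma kproj_sum: "kproj d (sum u D) = (\<Sum>e\<in>D. kproj d (u e))"
  by (induction D rule: infinite_finite_induct) (auto simp: kproj_zero kproj_add)

lemma kan_homog_subspace: "K.subspace {u :: 'k::field kan. kan_homog d u}"
  unfolding K.subspace_def kan_homog_def
  by (auto simp: homogeneous_zero homogeneous_add homogeneous_sscale kscale_def zero_prod_def)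

lemma Jdeg_kan_homog: "u \<in> Jdeg d \<Longrightarrow> kan_homog d u"
  using K.span_minimal[OF _ kan_homog_subspace, of "{u. jmon u d}" d] jmon_kan_homog
  unfolding Jdeg_def by blast

theorem Jdeg_direct_sum:
  fixes u :: "nat \<times> nat \<times> nat \<times> nat \<Rightarrow> 'k::field kan"
  assumes "finite D" "\<forall>d\<in>D. u d \<in> Jdeg d" "(\<Sum>d\<in>D. u d) = 0"
  shows "\<forall>d\<in>D. u d = 0"
proof
  fix d assume "d \<in> D"
  have "0 = kproj d (\<Sum>e\<in>D. u e)"
    using assms(3) by (simp add: kproj_zero)
  also have "\<dots> = (\<Sum>e\<in>D. if e = d then u e else 0)"
    unfolding kproj_sum
  proof (rule sum.cong[OF refl])
    fix e assume "e \<in> D"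
    then have "kan_homog e (u e)"
      using assms(2) Jdeg_kan_homog by blast
    then show "kproj d (u e) = (if e = d then u e else 0)"
      by (simp add: kproj_kan_homog eq_commute)
  qed
  also have "\<dots> = u d"
    using assms(1) \<open>d \<in> D\<close> by simp
  finally show "u d = 0" ..
qed

lemma kproj_span_Jdeg:
  assumes "u \<in> K.span (\<Union>e. Jdeg e)"
  shows "kproj d u \<in> Jdeg d"
proof -
  have "K.subspace {x. kproj d x \<in> Jdeg d}"
    using K.subspace_span[of "{u. jmon u d}"] unfolding K.subspace_def Jdeg_def[symmetric]
    by (auto simp: kproj_add kproj_kscale kproj_zero)
  moreover have "kproj d x \<in> Jdeg d" if "x \<in> Jdeg e" for x e
    using that Jdeg_kan_homog[OF that] K.span_zero[of "{u. jmon u d}"]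
    by (auto simp: kproj_kan_homog Jdeg_def)
  ultimately show ?thesis
    using K.span_subspace_induct[OF assms] by blast
qed

lemma Kan_kan_homog_in_Jdeg:
  assumes "u \<in> Kan" "kan_homog d u"
  shows "u \<in> Jdeg d"
proof -
  have "kproj d u \<in> Jdeg d"
    using assms(1) Kan_eq_span_Jdeg by (intro kproj_span_Jdeg) blast
  then show ?thesis
    using kproj_kan_homog[OF assms(2)] by simp
qed

section \<open>The homogeneous components are finite dimensional\<close>

lemma (in vector_space) card_independent_le_dim:
  assumes "B \<subseteq> S" "independent B" "S \<subseteq> span W" "finite W"
  shows "card B \<le> dim S"
proof -
  obtain C where C: "C \<subseteq> S" "independent C" "S \<subseteq> span C" "card C = dim S"
    by (rule basis_exists)
  have "finite C"
    using independent_span_bound[OF assms(4) C(2)] C(1) assms(3) by blast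
  then show ?thesis
    using independent_span_bound[OF _ assms(2)] assms(1) C(3,4) by fastforce
qed

lemma kmul_kone_left: "v \<in> Kan \<Longrightarrow> kmul kone v = v"
  using Kan_Htilde[of v] by (simp add: kmul_def kone_def smul_sone_left prod_eq_iff)

lemma kmul_kone_right: "u \<in> Kan \<Longrightarrow> kmul u kone = u"
  using Kan_Htilde[of u] by (simp add: kmul_def kone_def smul_sone_right prod_eq_iff)

lemma jmon_degree_0: "jmon u d \<Longrightarrow> d = 0 \<Longrightarrow> u = kone"
proof (induction rule: jmon.induct)
  case (prod u a1 a2 a3 a4 v b1 b2 b3 b4)
  then have "u = kone" "v = kone"
    by (simp_all add: zero_prod_def)
  then show ?case
    using kmul_kone_left[OF jmon_Kan[OF jmon.unit]] by simp
qed (simp_all add: zero_prod_def)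

text \<open>Factors of degree 0 are the unit and can be dropped from a Jordan monomial.\<close>
lemma jmon_split:
  assumes "jmon u d"
  shows "u \<in> {kone, kV 0, kV 1, kV 2, kbar1} \<or>
    (\<exists>x y a b. jmon x a \<and> jmon y b \<and> a \<noteq> 0 \<and> b \<noteq> 0 \<and> d = a + b \<and> u = kmul x y)"
  using assms
proof (induction rule: jmon.induct)
  case (prod u a1 a2 a3 a4 v b1 b2 b3 b4)
  let ?a = "(a1, a2, a3, a4)" and ?b = "(b1, b2, b3, b4)"
  consider "?a = 0" | "?b = 0" | "?a \<noteq> 0" "?b \<noteq> 0"
    by blast
  then show ?case
  proof cases
    case 1
    then have "kmul u v = v"
      using jmon_degree_0[OF prod.hyps(1)] kmul_kone_left[OF jmon_Kan[OF prod.hyps(2)]] by simp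
    then show ?thesis
      using prod.IH(2) 1 by (simp add: zero_prod_def)
  next
    case 2
    then have "kmul u v = u"
      using jmon_degree_0[OF prod.hyps(2)] kmul_kone_right[OF jmon_Kan[OF prod.hyps(1)]] by simp
    then show ?thesis
      using prod.IH(1) 2 by (simp add: zero_prod_def)
  next
    case 3
    then show ?thesis
      using prod.hyps by fastforce
  qed
qed simp_all

definition total_degree :: "nat \<times> nat \<times> nat \<times> nat \<Rightarrow> nat" where
  "total_degree = (\<lambda>(n1, n2, n3, n4). n1 + n2 + n3 + n4)"

lemma total_degree_less: "b \<noteq> 0 \<Longrightarrow> total_degree a < total_degree (a + b)"
  by (cases a rule: prod_cases4, cases b rule: prod_cases4) (auto simp: total_degree_def zero_prod_def)

lemma finite_splittings: "finite {(a, b). a + b = (d :: nat \<times> nat \<times> nat \<times> nat)}"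
proof -
  obtain n1 n2 n3 n4 where d: "d = (n1, n2, n3, n4)"
    by (cases d rule: prod_cases4)
  let ?S = "{..n1} \<times> {..n2} \<times> {..n3} \<times> {..n4}"
  have "a \<in> ?S \<and> b \<in> ?S" if "a + b = d" for a b
    using that unfolding d by (cases a rule: prod_cases4, cases b rule: prod_cases4) auto
  then have "{(a, b). a + b = d} \<subseteq> ?S \<times> ?S"
    by auto
  then show ?thesis
    by (rule finite_subset) simp
qed

lemma finite_jmon: "finite {u :: 'k::field kan. jmon u d}"
proof (induction d rule: measure_induct_rule[of total_degree])
  case (less d)
  let ?P = "{(a, b). a + b = d \<and> a \<noteq> 0 \<and> b \<noteq> 0}"
  let ?prods = "\<lambda>(a, b). (\<lambda>(x, y). kmul x y) ` ({x :: 'k kan. jmon x a} \<times> {y. jmon y b})"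
  have "finite (?prods p)" if "p \<in> ?P" for p
  proof -
    obtain a b where p: "p = (a, b)" "d = a + b" "a \<noteq> 0" "b \<noteq> 0"
      using \<open>p \<in> ?P\<close> by blast
    then have lt: "total_degree a < total_degree d" "total_degree b < total_degree d"
      using total_degree_less[of b a] total_degree_less[of a b] by (simp_all add: add.commute)
    have "finite {x :: 'k kan. jmon x a}"
      using lt(1) by (rule less)
    moreover have "finite {y :: 'k kan. jmon y b}"
      using lt(2) by (rule less)
    ultimately show ?thesis
      unfolding p(1) prod.case by (intro finite_imageI finite_cartesian_product)
  qed
  moreover have "finite ?P"
    using finite_splittings[of d] by (rule rev_finite_subset) blast
  ultimately have "finite (\<Union>p\<in>?P. ?prods p)"
    by (rule finite_UN_I[rotated])
  then have "finite ({kone, kV 0, kV 1, kV 2, kbar1} \<union> (\<Union>p\<in>?P. ?prods p))"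
    by simp
  moreover have "{u :: 'k kan. jmon u d} \<subseteq> {kone, kV 0, kV 1, kV 2, kbar1} \<union> (\<Union>p\<in>?P. ?prods p)"
  proof
    fix u :: "'k kan" assume "u \<in> {u. jmon u d}"
    then consider "u \<in> {kone, kV 0, kV 1, kV 2, kbar1}"
      | x y a b where "jmon x a" "jmon y b" "a \<noteq> 0" "b \<noteq> 0" "d = a + b" "u = kmul x y"
      using jmon_split by blast
    then show "u \<in> {kone, kV 0, kV 1, kV 2, kbar1} \<union> (\<Union>p\<in>?P. ?prods p)"
    proof cases
      case (2 x y a b)
      then have "u \<in> ?prods (a, b)" "(a, b) \<in> ?P"
        by auto
      then show ?thesis
        by blast
    qed blast
  qed
  ultimately show ?case
    by (rule finite_subset[rotated])
qed

lemma card_le_dim_Jdeg: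
  fixes B :: "'k::field kan set"
  assumes "B \<subseteq> Jdeg d" "K.independent B"
  shows "card B \<le> K.dim (Jdeg d :: 'k kan set)"
proof (rule K.card_independent_le_dim[OF assms _ finite_jmon])
  show "Jdeg d \<subseteq> K.span {u. jmon u d}"
    unfolding Jdeg_def ..
qed

section \<open>Every V j lies in P\<close>

text \<open>dV j = x_(j+1) V_(j+3) is the x_j-derivative of V_j = y_j + x_j x_(j+1) V_(j+3).\<close>
definition dV :: "nat \<Rightarrow> 'k::field ser" where
  "dV j m = (if \<exists>k. m = (insert (j + 1) (V_xset (j + 3) k), {j + 3 + 3 * k}) then 1 else 0)"

lemma V_nonzeroE:
  assumes "V j (a, b) \<noteq> 0"
  obtains k where "a = V_xset j k" "b = {j + 3 * k}"
  using assms by (auto simp: V_nonzero_iff)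

lemma dV_nonzeroE:
  assumes "dV j (a, b) \<noteq> 0"
  obtains k where "a = insert (j + 1) (V_xset (j + 3) k)" "b = {j + 3 + 3 * k}"
  using assms by (auto simp: dV_def split: if_splits)

lemma V_xset_shift_notin: "j \<notin> V_xset (j + 3) k" "j + 1 \<notin> V_xset (j + 3) k"
  by (auto simp: mem_V_xset)

lemma mem_V_xset_start: "j \<in> V_xset j k \<longleftrightarrow> 0 < k" "j + 1 \<in> V_xset j k \<longleftrightarrow> 0 < k"
  by (auto simp: mem_V_xset)

lemma V_singleton: "V j ({}, {i}) = (if i = j then 1 else 0)"
proof -
  have "({}, {i}) = (V_xset j k, {j + 3 * k}) \<longleftrightarrow> i = j \<and> k = 0" for k
    using mem_V_xset_start(1)[of j k] by (cases k) auto
  then show ?thesis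
    by (simp add: V_eq)
qed

lemma V_insert: "j \<notin> A \<Longrightarrow> V j (insert j A, B) = dV j (A, B)"
proof -
  assume "j \<notin> A"
  have "insert j A = V_xset j l \<longleftrightarrow> (\<exists>k. l = Suc k \<and> A = insert (j + 1) (V_xset (j + 3) k))" for l
  proof (cases l)
    case 0
    then show ?thesis
      by simp
  next
    case (Suc k)
    have "insert j A = insert j (insert (j + 1) (V_xset (j + 3) k)) \<longleftrightarrow> A = insert (j + 1) (V_xset (j + 3) k)"
      using \<open>j \<notin> A\<close> V_xset_shift_notin[of j k] by (auto simp: insert_ident)
    then show ?thesis
      using Suc by (simp add: V_xset_Suc_left)
  qed
  then show ?thesis
    by (auto simp: V_eq dV_def)
qed

lemma dV_nonzeroD:
  assumes "dV j (A, B) \<noteq> 0"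
  shows "finite A \<and> finite B \<and> (\<forall>a\<in>A. j < a) \<and> odd (card A) \<and> card B = 1"
proof -
  obtain k where k: "A = insert (j + 1) (V_xset (j + 3) k)" "B = {j + 3 + 3 * k}"
    using assms by (rule dV_nonzeroE)
  then have "card A = 2 * k + 1"
    using V_xset_shift_notin(2)[of j k] card_V_xset[of "j + 3" k] by simp
  moreover have "\<forall>a\<in>A. j < a"
    using k(1) V_xset_ge[of _ "j + 3" k] by fastforce
  ultimately show ?thesis
    using k by simp
qed

lemma dLx_V: "dLx j (V j) = (dV j :: 'k::field ser)"
proof
  fix m :: mon
  obtain A B where m: "m = (A, B)"
    by fastforce
  consider "j \<in> A" | "j \<notin> A" "(dV j (A, B) :: 'k) = 0" | "j \<notin> A" "(dV j (A, B) :: 'k) \<noteq> 0"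
    by blast
  then show "dLx j (V j) m = (dV j m :: 'k)"
  proof cases
    case 1
    then show ?thesis
      using dV_nonzeroD[where 'a = 'k, of j A B] by (auto simp: m dLx_def)
  next
    case 2
    then show ?thesis
      by (simp add: m dLx_def V_insert)
  next
    case 3
    then have "{a \<in> A. a < j} = {}"
      using dV_nonzeroD[OF 3(2)] by auto
    then have "(-1 :: 'k) ^ card {a \<in> A. a < j} = 1"
      by (simp only: card.empty power_0)
    then show ?thesis
      using 3 by (simp add: m dLx_def V_insert)
  qed
qed

lemma dRx_V: "dRx j (V j) = (dV j :: 'k::field ser)"
proof
  fix m :: mon
  obtain A B where m: "m = (A, B)"
    by fastforce
  consider "j \<in> A" | "j \<notin> A" "(dV j (A, B) :: 'k) = 0" | "j \<notin> A" "(dV j (A, B) :: 'k) \<noteq> 0"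
    by blast
  then show "dRx j (V j) m = (dV j m :: 'k)"
  proof cases
    case 1
    then show ?thesis
      using dV_nonzeroD[where 'a = 'k, of j A B] by (auto simp: m dRx_def)
  next
    case 2
    then show ?thesis
      by (simp add: m dRx_def V_insert)
  next
    case 3
    then have "{a \<in> A. j < a} = A" "even (card A + card B)"
      using dV_nonzeroD[OF 3(2)] by auto
    then show ?thesis
      using 3 by (simp add: m dRx_def V_insert)
  qed
qed

lemma V_finite: "(V j m :: 'k::field) \<noteq> 0 \<Longrightarrow> finite (fst m) \<and> finite (snd m)"
  using Htilde_finite[OF Htilde_V] by blast

lemma dV_finite: "dV j m \<noteq> 0 \<Longrightarrow> finite (fst m) \<and> finite (snd m)"
  by (cases m) (simp add: dV_nonzeroD)

lemma smul_eq_left_unit: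
  assumes "\<And>a b. a \<subseteq> fst m \<Longrightarrow> b \<subseteq> snd m \<Longrightarrow> f (a, b) \<noteq> 0 \<Longrightarrow>
             g (fst m - a, snd m - b) \<noteq> 0 \<Longrightarrow> (a, b) = ({}, {})"
  shows "smul f g m = (if finite (fst m) \<and> finite (snd m) then f ({}, {}) * g m else 0)"
  by (subst smul_eq_single_term[where p = "({}, {})"]) (fact assms, simp add: msign_def inv_def)

lemma smul_eq_right_unit:
  assumes "\<And>a b. a \<subseteq> fst m \<Longrightarrow> b \<subseteq> snd m \<Longrightarrow> f (a, b) \<noteq> 0 \<Longrightarrow>
             g (fst m - a, snd m - b) \<noteq> 0 \<Longrightarrow> (a, b) = m"
  shows "smul f g m = (if finite (fst m) \<and> finite (snd m) then f m * g ({}, {}) else 0)"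
  by (subst smul_eq_single_term[where p = m]) (fact assms, simp add: msign_def inv_def)


lemma dRy_V_unit: "dRy i (V j) ({}, {}) = (if i = j then 1 else 0)"
  by (simp add: dRy_def V_singleton)

lemma dLy_V_unit: "dLy i (V j) ({}, {}) = (if i = j then 1 else 0)"
  by (simp add: dLy_def V_singleton)

text \<open>In both halves of the bracket of V_j with itself only the term y_j of one factor
  contributes: any longer term of it contains x_j, and so would the other factor.\<close>
lemma smul_dRy_V_dLx_V: "smul (dRy i (V j)) (dLx i (V j)) = (if i = j then dV j else (0 :: 'k::field ser))"
proof
  fix m
  have "(a, b) = ({}, {})"
    if h: "a \<subseteq> fst m" "dRy i (V j :: 'k ser) (a, b) \<noteq> 0" "dLx i (V j :: 'k ser) (fst m - a, snd m - b) \<noteq> 0" for a b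
  proof -
    obtain k where k: "a = V_xset j k" "insert i b = {j + 3 * k}" "i \<notin> b"
      using dRy_nonzeroD[OF h(2)] V_nonzeroE by metis
    obtain l where l: "insert i (fst m - a) = V_xset j l"
      using dLx_nonzeroD[OF h(3)] V_nonzeroE by metis
    have "k = 0"
    proof (rule ccontr)
      assume "k \<noteq> 0"
      then have "j \<in> a" "i \<noteq> j"
        using k mem_V_xset_start(1)[of j k] by auto
      moreover have "0 < l"
        using l by (cases l) auto
      ultimately show False
        using l mem_V_xset_start(1)[of j l] by auto
    qed
    then show ?thesis
      using k by auto
  qed
  then have "smul (dRy i (V j)) (dLx i (V j)) m =
      (if finite (fst m) \<and> finite (snd m) then dRy i (V j) ({}, {}) * dLx i (V j) m else (0 :: 'k))"
    by (intro smul_eq_left_unit) blast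
  also have "\<dots> = (if i = j then dV j else 0) m"
    using dV_finite[where 'a = 'k, of j m] by (auto simp: dRy_V_unit dLx_V)
  finally show "smul (dRy i (V j)) (dLx i (V j)) m = (if i = j then dV j else (0 :: 'k ser)) m" .
qed

lemma smul_dRx_V_dLy_V: "smul (dRx i (V j)) (dLy i (V j)) = (if i = j then dV j else (0 :: 'k::field ser))"
proof
  fix m
  have "(a, b) = m"
    if h: "a \<subseteq> fst m" "b \<subseteq> snd m" "dRx i (V j :: 'k ser) (a, b) \<noteq> 0"
      "dLy i (V j :: 'k ser) (fst m - a, snd m - b) \<noteq> 0" for a b
  proof -
    obtain k where k: "insert i a = V_xset j k"
      using dRx_nonzeroD[OF h(3)] V_nonzeroE by metis
    obtain l where l: "fst m - a = V_xset j l" "insert i (snd m - b) = {j + 3 * l}" "i \<notin> snd m - b"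
      using dLy_nonzeroD[OF h(4)] V_nonzeroE by metis
    have "l = 0"
    proof (rule ccontr)
      assume "l \<noteq> 0"
      then have "j \<in> fst m - a" "i \<noteq> j"
        using l mem_V_xset_start(1)[of j l] by auto
      moreover have "0 < k"
        using k by (cases k) auto
      ultimately show False
        using k mem_V_xset_start(1)[of j k] by auto
    qed
    then show ?thesis
      using l h(1,2) by (auto simp: prod_eq_iff)
  qed
  then have "smul (dRx i (V j)) (dLy i (V j)) m =
      (if finite (fst m) \<and> finite (snd m) then dRx i (V j) m * dLy i (V j) ({}, {}) else (0 :: 'k))"
    by (intro smul_eq_right_unit) blast
  also have "\<dots> = (if i = j then dV j else 0) m"
    using dV_finite[where 'a = 'k, of j m] by (auto simp: dLy_V_unit dRx_V)
  finally show "smul (dRx i (V j)) (dLy i (V j)) m = (if i = j then dV j else (0 :: 'k ser)) m" .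
qed

lemma sbr_V_V: "sbr (V j) (V j) = sscale 2 (dV j :: 'k::field ser)"
proof
  fix m
  have "sbr (V j) (V j) m = Sum_any (\<lambda>i. if i = j then 2 * (dV j m :: 'k) else 0)"
    unfolding sbr_def smul_dRy_V_dLx_V smul_dRx_V_dLy_V by (intro arg_cong[where f = Sum_any]) auto
  then show "sbr (V j) (V j) m = sscale 2 (dV j :: 'k ser) m"
    by (simp add: sscale_def)
qed


lemma dV_insert: "j + 1 \<notin> A \<Longrightarrow> dV j (insert (j + 1) A, B) = V (j + 3) (A, B)"
proof -
  assume "j + 1 \<notin> A"
  then have "insert (j + 1) A = insert (j + 1) (V_xset (j + 3) k) \<longleftrightarrow> A = V_xset (j + 3) k" for k
    using V_xset_shift_notin(2)[of j k] by (auto simp: insert_ident)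
  then show ?thesis
    by (simp add: V_eq dV_def add.assoc)
qed

lemma dLx_dV: "dLx (j + 1) (dV j) = (V (j + 3) :: 'k::field ser)"
proof
  fix m :: mon
  obtain A B where m: "m = (A, B)"
    by fastforce
  consider "j + 1 \<in> A" | "j + 1 \<notin> A" "(V (j + 3) (A, B) :: 'k) = 0" | "j + 1 \<notin> A" "(V (j + 3) (A, B) :: 'k) \<noteq> 0"
    by blast
  then show "dLx (j + 1) (dV j) m = (V (j + 3) m :: 'k)"
  proof cases
    case 1
    have "(V (j + 3) (A, B) :: 'k) = 0"
      using 1 V_xset_ge[of "j + 1" "j + 3"] by (auto simp: V_eq)
    then show ?thesis
      using 1 by (simp add: m dLx_def)
  next
    case 2
    moreover have "dV j (insert (j + 1) A, B) = (V (j + 3) (A, B) :: 'k)"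
      using 2(1) by (rule dV_insert)
    ultimately show ?thesis
      by (simp add: m dLx_def)
  next
    case 3
    then have "{a \<in> A. a < j + 1} = {}"
      using V_xset_ge[of _ "j + 3"] by (fastforce simp: V_nonzero_iff)
    then have "(-1 :: 'k) ^ card {a \<in> A. a < j + 1} = 1"
      by (simp only: card.empty power_0)
    moreover have "dV j (insert (j + 1) A, B) = (V (j + 3) (A, B) :: 'k)"
      using 3(1) by (rule dV_insert)
    ultimately show ?thesis
      using 3 by (simp add: m dLx_def)
  qed
qed

text \<open>In the bracket of V_(j+1) with dV_j only y_(j+1) meets x_(j+1); the other contractions
  would need an index j + 3 + 3l to be congruent to j + 1 or j + 2 modulo 3.\<close>
lemma smul_dRy_V_dLx_dV:
  "smul (dRy i (V (j + 1))) (dLx i (dV j)) = (if i = j + 1 then V (j + 3) else (0 :: 'k::field ser))"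
proof
  fix m
  have "(a, b) = ({}, {})"
    if h: "a \<subseteq> fst m" "dRy i (V (j + 1) :: 'k ser) (a, b) \<noteq> 0" "dLx i (dV j :: 'k ser) (fst m - a, snd m - b) \<noteq> 0"
    for a b
  proof -
    obtain k where k: "a = V_xset (j + 1) k" "insert i b = {j + 1 + 3 * k}" "i \<notin> b"
      using dRy_nonzeroD[OF h(2)] V_nonzeroE by metis
    obtain l where l: "insert i (fst m - a) = insert (j + 1) (V_xset (j + 3) l)"
      using dLx_nonzeroD[OF h(3)] dV_nonzeroE by metis
    have "k = 0"
    proof (rule ccontr)
      assume "k \<noteq> 0"
      then have "j + 1 \<in> a" "i \<noteq> j + 1"
        using k mem_V_xset_start(1)[of "j + 1" k] by auto
      moreover have "j + 1 \<in> insert i (fst m - a)"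
        unfolding l by simp
      ultimately show False
        by simp
    qed
    then show ?thesis
      using k by auto
  qed
  then have "smul (dRy i (V (j + 1))) (dLx i (dV j)) m =
      (if finite (fst m) \<and> finite (snd m) then dRy i (V (j + 1)) ({}, {}) * dLx i (dV j) m else (0 :: 'k))"
    by (intro smul_eq_left_unit) blast
  also have "\<dots> = (if i = j + 1 then V (j + 3) else 0) m"
    using V_finite[where 'k = 'k, of "j + 3" m] dLx_dV[where 'k = 'k, of j] by (auto simp: dRy_V_unit)
  finally show "smul (dRy i (V (j + 1))) (dLx i (dV j)) m = (if i = j + 1 then V (j + 3) else (0 :: 'k ser)) m" .
qed

lemma smul_dRx_V_dLy_dV: "smul (dRx i (V (j + 1))) (dLy i (dV j)) = (0 :: 'k::field ser)"
proof
  fix m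
  show "smul (dRx i (V (j + 1))) (dLy i (dV j)) m = (0 :: 'k ser) m"
  proof (rule ccontr)
    assume "smul (dRx i (V (j + 1))) (dLy i (dV j)) m \<noteq> (0 :: 'k ser) m"
    then obtain a b where ab: "dRx i (V (j + 1) :: 'k ser) (a, b) \<noteq> 0" "dLy i (dV j :: 'k ser) (fst m - a, snd m - b) \<noteq> 0"
      by (auto elim: smul_nonzeroD)
    obtain k where "insert i a = V_xset (j + 1) k"
      using dRx_nonzeroD[OF ab(1)] by (auto elim: V_nonzeroE)
    moreover obtain l where "insert i (snd m - b) = {j + 3 + 3 * l}"
      using dLy_nonzeroD[OF ab(2)] by (auto elim: dV_nonzeroE)
    ultimately have "i \<in> V_xset (j + 1) k" "i = j + 3 + 3 * l"
      by auto
    then show False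
      unfolding mem_V_xset by presburger
  qed
qed

lemma sbr_V_dV: "sbr (V (j + 1)) (dV j) = (V (j + 3) :: 'k::field ser)"
proof
  fix m
  have "sbr (V (j + 1)) (dV j) m = Sum_any (\<lambda>i. if i = j + 1 then (V (j + 3) m :: 'k) else 0)"
    unfolding sbr_def smul_dRy_V_dLx_dV smul_dRx_V_dLy_dV by (intro arg_cong[where f = Sum_any]) auto
  then show "sbr (V (j + 1)) (dV j) m = (V (j + 3) m :: 'k)"
    by simp
qed

text \<open>This is the only place where char K \<noteq> 2 is needed: dV j = {V_j, V_j} / 2.\<close>
lemma V_dV_in_Palg:
  assumes "(2 :: 'k::field) \<noteq> 0"
  shows "(V j :: 'k ser) \<in> Palg \<and> (dV j :: 'k ser) \<in> Palg"
proof (induction j rule: less_induct)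
  case (less j)
  have V: "(V j :: 'k ser) \<in> Palg"
  proof (cases "j < 3")
    case True
    then show ?thesis
      by (rule Palg.gen)
  next
    case False
    then obtain i where j: "j = i + 3"
      by (metis add.commute le_Suc_ex not_less)
    have "sbr (V (i + 1)) (dV i) \<in> (Palg :: 'k ser set)"
      using less j by (intro Palg.brack) auto
    then show ?thesis
      unfolding sbr_V_dV j .
  qed
  then have "sscale (1 / 2) (sbr (V j) (V j)) \<in> (Palg :: 'k ser set)"
    by (intro Palg.scale Palg.brack)
  moreover have "sscale (1 / 2) (sbr (V j) (V j)) = (dV j :: 'k ser)"
    using assms by (simp add: sbr_V_V sscale_sscale)
  ultimately show ?case
    using V by simp
qed

section \<open>Unboundedly many independent elements of one multidegree\<close>

definition low_part :: "'k::field ser \<Rightarrow> mon \<Rightarrow> 'k \<Rightarrow> bool" where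
  "low_part f p c \<longleftrightarrow> (\<forall>m. finite (fst m) \<and> card (fst m) \<le> 1 \<longrightarrow> f m = (if m = p then c else 0))"

lemma low_partD: "low_part f p c \<Longrightarrow> finite (fst m) \<Longrightarrow> card (fst m) \<le> 1 \<Longrightarrow> f m = (if m = p then c else 0)"
  unfolding low_part_def by blast

lemma low_part_smul:
  assumes f: "low_part f (A, B) c" "c \<noteq> 0" and g: "low_part g (C, D) e" "e \<noteq> 0"
    and disj: "A \<inter> C = {}" "B \<inter> D = {}"
    and fin: "finite A" "finite B" "finite C" "finite D" and card: "card (A \<union> C) \<le> 1"
  shows "\<exists>c'. c' \<noteq> 0 \<and> low_part (smul f g) (A \<union> C, B \<union> D) c'"
proof (intro exI conjI)
  show "msign (A, B) (C, D) * c * e \<noteq> 0"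
    using f(2) g(2) by (simp add: msign_def)
  show "low_part (smul f g) (A \<union> C, B \<union> D) (msign (A, B) (C, D) * c * e)"
    unfolding low_part_def
  proof (intro allI impI)
    fix m :: mon assume m: "finite (fst m) \<and> card (fst m) \<le> 1"
    have "(a, b) = (A, B)" if "a \<subseteq> fst m" "f (a, b) \<noteq> 0" for a b
    proof -
      have "finite a" "card a \<le> 1"
        using that(1) m card_mono[of "fst m" a] finite_subset by fastforce+
      then show ?thesis
        using low_partD[OF f(1), of "(a, b)"] that(2) by (simp split: if_splits)
    qed
    then have single: "smul f g m = (if finite (fst m) \<and> finite (snd m) \<and> A \<subseteq> fst m \<and> B \<subseteq> snd m
        then msign (A, B) (fst m - A, snd m - B) * f (A, B) * g (fst m - A, snd m - B) else 0)"
      using smul_eq_single_term[of m f g "(A, B)"] by simp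
    show "smul f g m = (if m = (A \<union> C, B \<union> D) then msign (A, B) (C, D) * c * e else 0)"
    proof (cases "finite (snd m) \<and> A \<subseteq> fst m \<and> B \<subseteq> snd m")
      case True
      have "f (A, B) = c"
        using low_partD[OF f(1), of "(A, B)"] fin card card_mono[of "A \<union> C" A] by auto
      moreover have "g (fst m - A, snd m - B) = (if (fst m - A, snd m - B) = (C, D) then e else 0)"
        using low_partD[OF g(1), of "(fst m - A, snd m - B)"] m card_mono[of "fst m" "fst m - A"] by auto
      moreover have "(fst m - A, snd m - B) = (C, D) \<longleftrightarrow> m = (A \<union> C, B \<union> D)"
        using True disj by (auto simp: prod_eq_iff)
      ultimately show ?thesis
        unfolding single using True m by auto
    next
      case False
      then have "m \<noteq> (A \<union> C, B \<union> D)"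
        using fin by auto
      then show ?thesis
        unfolding single using False by auto
    qed
  qed
qed

lemma low_part_sone: "low_part sone ({}, {}) 1"
  unfolding low_part_def sone_def by auto

lemma low_part_V: "low_part (V j) ({}, {j}) 1"
  unfolding low_part_def
proof (intro allI impI)
  fix m :: mon assume m: "finite (fst m) \<and> card (fst m) \<le> 1"
  have "m = ({}, {j})" if "V j m \<noteq> 0"
  proof -
    obtain k where k: "fst m = V_xset j k" "snd m = {j + 3 * k}"
      using \<open>V j m \<noteq> 0\<close> by (auto simp: V_nonzero_iff)
    then have "k = 0"
      using m card_V_xset[of j k] by simp
    then show ?thesis
      using k by (simp add: prod_eq_iff)
  qed
  then show "V j m = (if m = ({}, {j}) then 1 else 0)"
    using V_singleton[of j j] by auto
qed

lemma low_part_dV: "low_part (dV j) ({j + 1}, {j + 3}) 1"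
  unfolding low_part_def
proof (intro allI impI)
  fix m :: mon assume m: "finite (fst m) \<and> card (fst m) \<le> 1"
  have "m = ({j + 1}, {j + 3})" if "dV j m \<noteq> 0"
  proof -
    obtain k where k: "fst m = insert (j + 1) (V_xset (j + 3) k)" "snd m = {j + 3 + 3 * k}"
      using \<open>dV j m \<noteq> 0\<close> by (cases m) (auto elim: dV_nonzeroE)
    then have "card (fst m) = 2 * k + 1"
      using V_xset_shift_notin(2)[of j k] card_V_xset[of "j + 3" k] by simp
    then have "k = 0"
      using m by simp
    then show ?thesis
      using k by (simp add: prod_eq_iff)
  qed
  moreover have "dV j ({j + 1}, {j + 3}) = 1"
    unfolding dV_def by (auto intro: exI[of _ 0])
  ultimately show "dV j m = (if m = ({j + 1}, {j + 3}) then 1 else 0)"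
    by auto
qed


definition family_factor :: "nat \<Rightarrow> nat \<Rightarrow> 'k::field ser" where
  "family_factor s t = (if t = s then smul (dV (3 * s)) (V (3 * s + 1)) else V (3 * t + 3))"

text \<open>family s n is V_3 V_6 ... V_(3n) with the factor V_(3s+3) = {V_(3s+1), dV_(3s)} replaced by
  the product dV_(3s) V_(3s+1); all of them have the same multidegree.\<close>
primrec family :: "nat \<Rightarrow> nat \<Rightarrow> 'k::field ser" where
  "family s 0 = sone"
| "family s (Suc t) = smul (family s t) (family_factor s t)"

definition lead_x :: "nat \<Rightarrow> nat \<Rightarrow> nat set" where
  "lead_x s n = (if s < n then {3 * s + 1} else {})"

definition lead_mon :: "nat \<Rightarrow> nat \<Rightarrow> mon" where
  "lead_mon s n = (lead_x s n, (\<lambda>t. 3 * t + 3) ` {..<n} \<union> lead_x s n)"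

lemma low_part_family_factor:
  "\<exists>c. c \<noteq> 0 \<and> low_part (family_factor s t :: 'k::field ser)
     (if t = s then ({3 * s + 1}, {3 * s + 1, 3 * s + 3}) else ({}, {3 * t + 3})) c"
proof (cases "t = s")
  case True
  have "\<exists>c. c \<noteq> 0 \<and> low_part (smul (dV (3 * s)) (V (3 * s + 1)) :: 'k ser)
     ({3 * s + 1} \<union> {}, {3 * s + 3} \<union> {3 * s + 1}) c"
    by (rule low_part_smul[OF low_part_dV _ low_part_V]) auto
  then show ?thesis
    using True by (simp add: family_factor_def insert_commute)
next
  case False
  then show ?thesis
    using low_part_V[of "3 * t + 3"] by (auto simp: family_factor_def intro: exI[of _ 1])
qed

lemma low_part_family: "\<exists>c. c \<noteq> 0 \<and> low_part (family s n :: 'k::field ser) (lead_mon s n) c"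
proof (induction n)
  case 0
  then show ?case
    using low_part_sone by (auto simp: lead_mon_def lead_x_def intro: exI[of _ 1])
next
  case (Suc t)
  let ?Y = "(\<lambda>t. 3 * t + 3) ` {..<t}"
  obtain c where c: "low_part (family s t :: 'k ser) (lead_x s t, ?Y \<union> lead_x s t) c" "c \<noteq> 0"
    using Suc by (auto simp: lead_mon_def)
  have fresh: "3 * t + 3 \<notin> ?Y" "3 * s + 1 \<notin> ?Y" "3 * s + 1 \<noteq> 3 * t + 3"
    by (auto, presburger+)
  have Y: "(\<lambda>t. 3 * t + 3) ` {..<Suc t} = insert (3 * t + 3) ?Y"
    by (simp add: lessThan_Suc)
  show ?case
  proof (cases "t = s")
    case True
    obtain c' where c': "low_part (family_factor s t :: 'k ser) ({3 * s + 1}, {3 * s + 1, 3 * s + 3}) c'" "c' \<noteq> 0"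
      using low_part_family_factor[of s t] True by auto
    have "\<exists>c. c \<noteq> 0 \<and> low_part (family s (Suc t) :: 'k ser)
        (lead_x s t \<union> {3 * s + 1}, (?Y \<union> lead_x s t) \<union> {3 * s + 1, 3 * s + 3}) c"
      unfolding family.simps by (rule low_part_smul[OF c c']) (use fresh True in \<open>auto simp: lead_x_def\<close>)
    moreover have "(lead_x s t \<union> {3 * s + 1}, (?Y \<union> lead_x s t) \<union> {3 * s + 1, 3 * s + 3}) = lead_mon s (Suc t)"
      using True Y by (auto simp: lead_mon_def lead_x_def)
    ultimately show ?thesis
      by simp
  next
    case False
    obtain c' where c': "low_part (family_factor s t :: 'k ser) ({}, {3 * t + 3}) c'" "c' \<noteq> 0"
      using low_part_family_factor[of s t] False by auto
    have "\<exists>c. c \<noteq> 0 \<and> low_part (family s (Suc t) :: 'k ser)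
        (lead_x s t \<union> {}, (?Y \<union> lead_x s t) \<union> {3 * t + 3}) c"
      unfolding family.simps by (rule low_part_smul[OF c c']) (use fresh False in \<open>auto simp: lead_x_def\<close>)
    moreover have "(lead_x s t \<union> {}, (?Y \<union> lead_x s t) \<union> {3 * t + 3}) = lead_mon s (Suc t)"
      using False Y by (auto simp: lead_mon_def lead_x_def)
    ultimately show ?thesis
      by simp
  qed
qed

lemma family_lead_coeff:
  assumes "s < n" "s' < n"
  shows "(family s' n (lead_mon s n) :: 'k::field) \<noteq> 0 \<longleftrightarrow> s' = s"
proof -
  obtain c where c: "c \<noteq> 0" "low_part (family s' n :: 'k ser) (lead_mon s' n) c"
    using low_part_family by blast
  have "finite (fst (lead_mon s n))" "card (fst (lead_mon s n)) \<le> 1"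
    by (simp_all add: lead_mon_def lead_x_def)
  then have "family s' n (lead_mon s n) = (if lead_mon s n = lead_mon s' n then c else 0)"
    by (rule low_partD[OF c(2)])
  moreover have "lead_mon s n = lead_mon s' n \<longleftrightarrow> s' = s"
    using assms by (auto simp: lead_mon_def lead_x_def)
  ultimately show ?thesis
    using c(1) by auto
qed

lemma homog_dV: "homog (ywt j + ywt j - (0, 0, 0, 2)) (dV j)"
  unfolding homogeneous_def
proof (intro allI impI)
  fix m :: mon assume "dV j m \<noteq> 0"
  then obtain k where m: "m = (insert (j + 1) (V_xset (j + 3) k), {j + 3 + 3 * k})"
    by (cases m) (auto elim: dV_nonzeroE)
  have "mon_weight xwt ywt m = mon_weight xwt ywt (V_xset (j + 3) k, {j + 3 + 3 * k}) + xwt (j + 1)"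
    unfolding m using V_xset_shift_notin(2) by (intro mon_weight_insert_fst) auto
  also have "\<dots> = ywt j + ywt j - (0, 0, 0, 2)"
    using mon_weight_V[of "j + 3" k] by (simp add: ywt_add_3 xwt_def add.assoc)
  finally show "finite (fst m) \<and> finite (snd m) \<and> mon_weight xwt ywt m = ywt j + ywt j - (0, 0, 0, 2)"
    unfolding m by simp
qed

lemma homog_family_factor:
  "homog (ywt (3 * t + 3) + (if t = s then (0, 0, 0, 2) else 0)) (family_factor s t)"
proof (cases "t = s")
  case True
  have "ywt (3 * t + 3) + (0, 0, 0, 2) = (ywt (3 * s) + ywt (3 * s) - (0, 0, 0, 2)) + ywt (3 * s + 1)"
    using True ywt_add_3[of "3 * s"] by simp
  then show ?thesis
    using True homogeneous_smul[OF homog_dV homog_V] by (simp add: family_factor_def)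
qed (simp add: family_factor_def homog_V)

lemma homog_family:
  "homog ((\<Sum>t<n. ywt (3 * t + 3)) + (if s < n then (0, 0, 0, 2) else 0)) (family s n)"
proof (induction n)
  case 0
  then show ?case
    using homogeneous_sone by simp
next
  case (Suc n)
  have "(\<Sum>t<Suc n. ywt (3 * t + 3)) + (if s < Suc n then (0, 0, 0, 2) else 0) =
      ((\<Sum>t<n. ywt (3 * t + 3)) + (if s < n then (0, 0, 0, 2) else 0)) +
      (ywt (3 * n + 3) + (if n = s then (0, 0, 0, 2) else 0))"
    by auto
  then show ?case
    unfolding family.simps by (simp only:) (rule homogeneous_smul[OF Suc homog_family_factor])
qed

lemma family_in_Palg:
  assumes "(2 :: 'k::field) \<noteq> 0"
  shows "(family s n :: 'k ser) \<in> Palg"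
proof (induction n)
  case (Suc n)
  have "(family_factor s n :: 'k ser) \<in> Palg"
    unfolding family_factor_def using V_dV_in_Palg[OF assms] by (auto intro: Palg.mult)
  then show ?case
    using Suc by (simp add: Palg.mult)
qed (simp add: Palg.one)

lemma ywt_signs: "ywt j = (a, b, c, e) \<Longrightarrow> 0 \<le> a \<and> 0 \<le> b \<and> 0 \<le> c \<and> e \<le> (if j < 3 then 0 else -4)"
proof (induction j arbitrary: a b c e rule: ywt.induct)
  case (4 j)
  obtain a1 b1 c1 e1 a2 b2 c2 e2 where "ywt j = (a1, b1, c1, e1)" "ywt (Suc j) = (a2, b2, c2, e2)"
    by (metis prod_cases4)
  with "4.IH" "4.prems" show ?case
    by (fastforce split: if_splits)
qed auto

text \<open>Each V_(3t+3) contributes at most -4 to the last coordinate, which therefore stays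
  negative after adding 2.\<close>
lemma family_weight_attained:
  assumes "0 < n"
  obtains d where "jweight d = (\<Sum>t<n. ywt (3 * t + 3)) + (0, 0, 0, 2)"
proof -
  have "\<exists>a b c e. (\<Sum>t<n. ywt (3 * t + 3)) = (a, b, c, e) \<and> 0 \<le> a \<and> 0 \<le> b \<and> 0 \<le> c \<and> e \<le> - 4 * int n" for n
  proof (induction n)
    case (Suc n)
    then obtain a b c e where "(\<Sum>t<n. ywt (3 * t + 3)) = (a, b, c, e)" "0 \<le> a" "0 \<le> b" "0 \<le> c" "e \<le> - 4 * int n"
      by blast
    moreover obtain a' b' c' e' where "ywt (3 * n + 3) = (a', b', c', e')"
      by (metis prod_cases4)
    moreover note ywt_signs[OF this]
    ultimately show ?case
      by auto
  qed (simp add: zero_prod_def)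
  then obtain a b c e where w: "(\<Sum>t<n. ywt (3 * t + 3)) = (a, b, c, e)" "0 \<le> a" "0 \<le> b" "0 \<le> c" "e \<le> - 4 * int n"
    by blast
  have "jweight (nat a, nat b, nat c, nat (- e - 2)) = (\<Sum>t<n. ywt (3 * t + 3)) + (0, 0, 0, 2)"
    using w assms by (simp add: jweight_def)
  then show ?thesis
    by (rule that)
qed

lemma family_in_Jdeg:
  assumes "(2 :: 'k::field) \<noteq> 0" "s < n" "jweight d = (\<Sum>t<n. ywt (3 * t + 3)) + (0, 0, 0, 2)"
  shows "(family s n :: 'k ser, 0) \<in> Jdeg d"
proof (rule Kan_kan_homog_in_Jdeg)
  show "(family s n :: 'k ser, 0) \<in> Kan"
    unfolding Kan_def using family_in_Palg[OF assms(1)] zero_in_Palg by simp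
  show "kan_homog d (family s n :: 'k ser, 0)"
    using homog_family[of n s] assms(2,3) by (simp add: kan_homog_def homogeneous_zero)
qed


lemma family_independent:
  fixes n :: nat
  defines "e \<equiv> \<lambda>s. (family s n :: 'k::field ser, 0 :: 'k ser)"
  shows "inj_on e {..<n}" and "K.independent (e ` {..<n})"
proof -
  have coeff: "fst (e s') (lead_mon s n) \<noteq> 0 \<longleftrightarrow> s' = s" if "s < n" "s' < n" for s s'
    using family_lead_coeff[OF that] by (simp add: e_def)
  show "inj_on e {..<n}"
    using coeff by (intro inj_onI) (metis lessThan_iff)
  show "K.independent (e ` {..<n})"
    unfolding K.dependent_explicit
  proof (intro notI, elim exE conjE bexE)
    fix T u v assume T: "finite T" "T \<subseteq> e ` {..<n}" "(\<Sum>v\<in>T. kscale (u v) v) = 0"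
      and v: "v \<in> T" "u v \<noteq> 0"
    obtain s where s: "s < n" "v = e s"
      using T(2) v(1) by blast
    have "0 = fst (\<Sum>w\<in>T. kscale (u w) w) (lead_mon s n)"
      using T(3) by simp
    also have "\<dots> = (\<Sum>w\<in>T. u w * fst w (lead_mon s n))"
      by (induction T rule: infinite_finite_induct) (simp_all add: kscale_def sscale_def)
    also have "\<dots> = u v * fst v (lead_mon s n)"
    proof (rule trans[OF sum_eq_single[where a = v]])
      fix w assume "w \<in> T" "w \<noteq> v"
      then obtain s' where s': "s' < n" "w = e s'" "s' \<noteq> s"
        using T(2) s(2) by blast
      then show "u w * fst w (lead_mon s n) = 0"
        using coeff[OF s(1) s'(1)] by simp
    qed (use T(1) v(1) in simp_all)
    finally show False
      using v(2) coeff[OF s(1) s(1)] s(2) by simp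
  qed
qed

theorem dim_Jdeg_unbounded:
  assumes "(2 :: 'k::field) \<noteq> 0"
  shows "\<exists>d. K.dim (Jdeg d :: 'k kan set) > N"
proof -
  define e where "e s = (family s (Suc N) :: 'k ser, 0 :: 'k ser)" for s
  obtain d where d: "jweight d = (\<Sum>t<Suc N. ywt (3 * t + 3)) + (0, 0, 0, 2)"
    using family_weight_attained by blast
  have "e ` {..<Suc N} \<subseteq> Jdeg d"
    using family_in_Jdeg[OF assms _ d] by (auto simp: e_def)
  then have "card (e ` {..<Suc N}) \<le> K.dim (Jdeg d :: 'k kan set)"
    using family_independent(2)[of "Suc N"] unfolding e_def by (rule card_le_dim_Jdeg)
  moreover have "inj_on e {..<Suc N}"
    unfolding e_def by (rule family_independent(1))
  then have "card (e ` {..<Suc N}) = Suc N"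
    by (simp add: card_image)
  ultimately have "N < K.dim (Jdeg d :: 'k kan set)"
    by simp
  then show ?thesis ..
qed

theorem corollary12p13:
  assumes "(2::'k::field) \<noteq> 0"
  shows "(Kan :: 'k kan set) = module.span kscale (\<Union>d. Jdeg d)
       \<and> (\<forall>D (u :: nat \<times> nat \<times> nat \<times> nat \<Rightarrow> 'k kan). finite D \<longrightarrow> (\<forall>d\<in>D. u d \<in> Jdeg d)
            \<longrightarrow> (\<Sum>d\<in>D. u d) = 0 \<longrightarrow> (\<forall>d\<in>D. u d = 0))
       \<and> (\<forall>N. \<exists>d. vector_space.dim kscale (Jdeg d :: 'k kan set) > N)"
  using Kan_eq_span_Jdeg Jdeg_direct_sum dim_Jdeg_unbounded[OF assms] by blast

end
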